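(* Let $\mathcal{C}$ be a triangulated category and let $d=\infty$ or $d$ an odd positive integer. Suppose that to every object $X$ of $\mathcal{C}$ is assigned an element $\rho(X)\in\mathbb{R}(d)$ such that: (a) $\rho(\Sigma X)=q\rho(X)$ for all $X$; (b) $\rho(X\oplus Y)=\rho(X)+\rho(Y)$ for all $X,Y$; (c) for every exact triangle $X\to Y\to Z\rightsquigarrow$ there is $\phi\in\mathbb{R}_{\geq0}(d)$ with $\rho(X)-\rho(Y)+\rho(Z)=(q+1)\phi$. Then for every morphism $f:X\to Y$ the formula $$\rho(f):=\frac{\rho(Y)-\rho(\operatorname{cone}(f))+q\rho(X)}{q+1}$$ (a well-defined quotient in $\mathbb{R}(d)$) determines a $d$-periodic rank function on $\mathcal{C}$. If in addition all $\rho(X)$ lie in $\mathbb{Z}(d)$ and the elements $\phi$ in (c) lie in $\mathbb{Z}(d)$, then the resulting rank function is integral.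
   Context: $\mathbb{R}(d)=\mathbb{R}[q,q^{-1}]$ if $d=\infty$ and $\mathbb{R}[q]/(q^d-1)$ if $d<\infty$; $\mathbb{Z}(d)$ is defined likewise with integer coefficients; $\mathbb{R}_{\geq0}(d)$ is the set of elements represented by (Laurent) polynomials with nonnegative coefficients; $\phi\geq\psi$ means $\phi-\psi\in\mathbb{R}_{\geq0}(d)$. A $d$-periodic rank function on $\mathcal{C}$ (translation $\Sigma$) assigns to each morphism $f$ an element $\rho(f)\in\mathbb{R}_{\geq0}(d)$ such that: $\rho(\Sigma f)=q\rho(f)$; $\rho(f\oplus g)=\rho(f)+\rho(g)$; $\rho(f)+\rho(g)=\rho(\mathrm{id}_Y)$ for each exact triangle $X\xrightarrow{f}Y\xrightarrow{g}Z\rightsquigarrow$; $\rho\begin{pmatrix} f&h\\0&g\end{pmatrix}\geq\rho(f)+\rho(g)$ for $f:X\to Y$, $g:Z\to W$, $h:Z\to Y$; and $\rho(gf)\leq\rho(f)$, $\rho(gf)\leq\rho(g)$ whenever $gf$ is defined. It is integral if all values lie in $\mathbb{Z}_{\geq0}(d)$. *)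

theory Defs
  imports Complex_Main "HOL-Library.Extended_Nat"
begin

text \<open>An element of R(d) is represented by its coefficient function int => real:
  for d = infinity a finitely supported function (Laurent polynomial, coefficient of q^n at n);
  for finite d > 0 a d-periodic function (coefficient of q^(n mod d) in R[q]/(q^d - 1)).\<close>

type_synonym rd = "int \<Rightarrow> real"

definition in_Rd :: "enat \<Rightarrow> rd \<Rightarrow> bool" where
  "in_Rd d c \<longleftrightarrow> (case d of \<infinity> \<Rightarrow> finite {n. c n \<noteq> 0}
                          | enat m \<Rightarrow> (\<forall>n. c (n + int m) = c n))"

definition rd_add :: "rd \<Rightarrow> rd \<Rightarrow> rd" where
  "rd_add a b = (\<lambda>n. a n + b n)"

definition rd_sub :: "rd \<Rightarrow> rd \<Rightarrow> rd" where
  "rd_sub a b = (\<lambda>n. a n - b n)"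

definition rd_zero :: rd where
  "rd_zero = (\<lambda>n. 0)"

text \<open>multiplication by q\<close>
definition rd_q :: "rd \<Rightarrow> rd" where
  "rd_q a = (\<lambda>n. a (n - 1))"

definition rd_q1 :: "rd \<Rightarrow> rd" where
  "rd_q1 a = rd_add (rd_q a) a"

definition rd_nonneg :: "enat \<Rightarrow> rd \<Rightarrow> bool" where
  "rd_nonneg d a \<longleftrightarrow> in_Rd d a \<and> (\<forall>n. a n \<ge> 0)"

definition rd_int :: "enat \<Rightarrow> rd \<Rightarrow> bool" where
  "rd_int d a \<longleftrightarrow> in_Rd d a \<and> (\<forall>n. a n \<in> \<int>)"

definition rd_ge :: "enat \<Rightarrow> rd \<Rightarrow> rd \<Rightarrow> bool" where
  "rd_ge d a b \<longleftrightarrow> rd_nonneg d (rd_sub a b)"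

record ('o, 'm) tricat =
  Ob   :: "'o set"
  Mor  :: "'m set"
  dom  :: "'m \<Rightarrow> 'o"
  cod  :: "'m \<Rightarrow> 'o"
  cmp  :: "'m \<Rightarrow> 'm \<Rightarrow> 'm"      \<comment> \<open>cmp g f = g o f\<close>
  idm  :: "'o \<Rightarrow> 'm"
  madd :: "'m \<Rightarrow> 'm \<Rightarrow> 'm"
  mneg :: "'m \<Rightarrow> 'm"
  zer  :: "'o \<Rightarrow> 'o \<Rightarrow> 'm"
  dsum :: "'o \<Rightarrow> 'o \<Rightarrow> 'o"
  in1  :: "'o \<Rightarrow> 'o \<Rightarrow> 'm"
  in2  :: "'o \<Rightarrow> 'o \<Rightarrow> 'm"
  pr1  :: "'o \<Rightarrow> 'o \<Rightarrow> 'm"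
  pr2  :: "'o \<Rightarrow> 'o \<Rightarrow> 'm"
  shO  :: "'o \<Rightarrow> 'o"            \<comment> \<open>translation functor Sigma on objects\<close>
  shM  :: "'m \<Rightarrow> 'm"
  tri  :: "('m \<times> 'm \<times> 'm) set" \<comment> \<open>exact triangles (f, g, h): X -> Y -> Z -> Sigma X\<close>

definition hom :: "('o, 'm, 'e) tricat_scheme \<Rightarrow> 'o \<Rightarrow> 'o \<Rightarrow> 'm set" where
  "hom C X Y = {f \<in> Mor C. dom C f = X \<and> cod C f = Y}"

definition is_iso :: "('o, 'm, 'e) tricat_scheme \<Rightarrow> 'm \<Rightarrow> bool" where
  "is_iso C f \<longleftrightarrow> f \<in> Mor C \<and> (\<exists>g \<in> hom C (cod C f) (dom C f).
      cmp C g f = idm C (dom C f) \<and> cmp C f g = idm C (cod C f))"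

definition is_zero_obj :: "('o, 'm, 'e) tricat_scheme \<Rightarrow> 'o \<Rightarrow> bool" where
  "is_zero_obj C Z \<longleftrightarrow> Z \<in> Ob C \<and> idm C Z = zer C Z Z"

definition is_tri_shape :: "('o, 'm, 'e) tricat_scheme \<Rightarrow> 'm \<Rightarrow> 'm \<Rightarrow> 'm \<Rightarrow> bool" where
  "is_tri_shape C f g h \<longleftrightarrow> f \<in> Mor C \<and> g \<in> Mor C \<and> h \<in> Mor C \<and>
      cod C f = dom C g \<and> cod C g = dom C h \<and> cod C h = shO C (dom C f)"

definition tri_mor :: "('o, 'm, 'e) tricat_scheme \<Rightarrow> 'm \<times> 'm \<times> 'm \<Rightarrow> 'm \<times> 'm \<times> 'm
                        \<Rightarrow> 'm \<Rightarrow> 'm \<Rightarrow> 'm \<Rightarrow> bool" where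
  "tri_mor C T T' a b c \<longleftrightarrow> (case T of (f, g, h) \<Rightarrow> case T' of (f', g', h') \<Rightarrow>
      a \<in> hom C (dom C f) (dom C f') \<and> b \<in> hom C (dom C g) (dom C g') \<and>
      c \<in> hom C (dom C h) (dom C h') \<and>
      cmp C b f = cmp C f' a \<and> cmp C c g = cmp C g' b \<and> cmp C (shM C a) h = cmp C h' c)"

definition category :: "('o, 'm, 'e) tricat_scheme \<Rightarrow> bool" where
  "category C \<longleftrightarrow>
    (\<forall>f \<in> Mor C. dom C f \<in> Ob C \<and> cod C f \<in> Ob C) \<and>
    (\<forall>X \<in> Ob C. idm C X \<in> hom C X X) \<and>
    (\<forall>f \<in> Mor C. \<forall>g \<in> Mor C. cod C f = dom C g \<longrightarrow> cmp C g f \<in> hom C (dom C f) (cod C g)) \<and>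
    (\<forall>f \<in> Mor C. \<forall>g \<in> Mor C. \<forall>h \<in> Mor C. cod C f = dom C g \<and> cod C g = dom C h \<longrightarrow>
        cmp C h (cmp C g f) = cmp C (cmp C h g) f) \<and>
    (\<forall>f \<in> Mor C. cmp C f (idm C (dom C f)) = f \<and> cmp C (idm C (cod C f)) f = f)"

definition additive :: "('o, 'm, 'e) tricat_scheme \<Rightarrow> bool" where
  "additive C \<longleftrightarrow> category C \<and>
    \<comment> \<open>hom sets are abelian groups\<close>
    (\<forall>X \<in> Ob C. \<forall>Y \<in> Ob C. zer C X Y \<in> hom C X Y \<and>
       (\<forall>f \<in> hom C X Y. \<forall>g \<in> hom C X Y. madd C f g \<in> hom C X Y \<and> madd C f g = madd C g f) \<and>
       (\<forall>f \<in> hom C X Y. \<forall>g \<in> hom C X Y. \<forall>h \<in> hom C X Y.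
           madd C (madd C f g) h = madd C f (madd C g h)) \<and>
       (\<forall>f \<in> hom C X Y. madd C f (zer C X Y) = f \<and> mneg C f \<in> hom C X Y \<and>
           madd C f (mneg C f) = zer C X Y)) \<and>
    \<comment> \<open>composition is bilinear\<close>
    (\<forall>X \<in> Ob C. \<forall>Y \<in> Ob C. \<forall>Z \<in> Ob C.
       (\<forall>f \<in> hom C X Y. \<forall>g \<in> hom C Y Z. \<forall>g' \<in> hom C Y Z.
           cmp C (madd C g g') f = madd C (cmp C g f) (cmp C g' f)) \<and>
       (\<forall>f \<in> hom C X Y. \<forall>f' \<in> hom C X Y. \<forall>g \<in> hom C Y Z.
           cmp C g (madd C f f') = madd C (cmp C g f) (cmp C g f'))) \<and>
    \<comment> \<open>zero object\<close>
    (\<exists>Z. is_zero_obj C Z) \<and>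
    \<comment> \<open>biproducts\<close>
    (\<forall>X \<in> Ob C. \<forall>Y \<in> Ob C. dsum C X Y \<in> Ob C \<and>
       in1 C X Y \<in> hom C X (dsum C X Y) \<and> in2 C X Y \<in> hom C Y (dsum C X Y) \<and>
       pr1 C X Y \<in> hom C (dsum C X Y) X \<and> pr2 C X Y \<in> hom C (dsum C X Y) Y \<and>
       cmp C (pr1 C X Y) (in1 C X Y) = idm C X \<and> cmp C (pr2 C X Y) (in2 C X Y) = idm C Y \<and>
       cmp C (pr2 C X Y) (in1 C X Y) = zer C X Y \<and> cmp C (pr1 C X Y) (in2 C X Y) = zer C Y X \<and>
       madd C (cmp C (in1 C X Y) (pr1 C X Y)) (cmp C (in2 C X Y) (pr2 C X Y)) = idm C (dsum C X Y))"

definition translation :: "('o, 'm, 'e) tricat_scheme \<Rightarrow> bool" where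
  "translation C \<longleftrightarrow>
    (\<forall>X \<in> Ob C. shO C X \<in> Ob C \<and> shM C (idm C X) = idm C (shO C X)) \<and>
    (\<forall>f \<in> Mor C. shM C f \<in> hom C (shO C (dom C f)) (shO C (cod C f))) \<and>
    (\<forall>f \<in> Mor C. \<forall>g \<in> Mor C. cod C f = dom C g \<longrightarrow> shM C (cmp C g f) = cmp C (shM C g) (shM C f)) \<and>
    (\<forall>X \<in> Ob C. \<forall>Y \<in> Ob C. \<forall>f \<in> hom C X Y. \<forall>g \<in> hom C X Y.
        shM C (madd C f g) = madd C (shM C f) (shM C g)) \<and>
    (\<forall>X \<in> Ob C. \<forall>Y \<in> Ob C. bij_betw (shM C) (hom C X Y) (hom C (shO C X) (shO C Y))) \<and>
    (\<forall>Y \<in> Ob C. \<exists>X \<in> Ob C. \<exists>u \<in> hom C (shO C X) Y. is_iso C u)"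

definition triangulated :: "('o, 'm, 'e) tricat_scheme \<Rightarrow> bool" where
  "triangulated C \<longleftrightarrow> additive C \<and> translation C \<and>
    (\<forall>(f, g, h) \<in> tri C. is_tri_shape C f g h) \<and>
    \<comment> \<open>TR1: closed under isomorphism\<close>
    (\<forall>T \<in> tri C. \<forall>f' g' h' a b c. is_tri_shape C f' g' h' \<and> tri_mor C T (f', g', h') a b c \<and>
        is_iso C a \<and> is_iso C b \<and> is_iso C c \<longrightarrow> (f', g', h') \<in> tri C) \<and>
    \<comment> \<open>TR1: X -id-> X -> 0 -> Sigma X is exact\<close>
    (\<forall>X \<in> Ob C. \<forall>Z. is_zero_obj C Z \<longrightarrow> (idm C X, zer C X Z, zer C Z (shO C X)) \<in> tri C) \<and>
    \<comment> \<open>TR1: every morphism extends to an exact triangle\<close>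
    (\<forall>f \<in> Mor C. \<exists>g h. (f, g, h) \<in> tri C) \<and>
    \<comment> \<open>TR2: rotation\<close>
    (\<forall>f g h. is_tri_shape C f g h \<longrightarrow> ((f, g, h) \<in> tri C \<longleftrightarrow> (g, h, mneg C (shM C f)) \<in> tri C)) \<and>
    \<comment> \<open>TR3: completion of morphisms of triangles\<close>
    (\<forall>f g h f' g' h' a b. (f, g, h) \<in> tri C \<and> (f', g', h') \<in> tri C \<and>
        a \<in> hom C (dom C f) (dom C f') \<and> b \<in> hom C (dom C g) (dom C g') \<and>
        cmp C b f = cmp C f' a \<longrightarrow> (\<exists>c. tri_mor C (f, g, h) (f', g', h') a b c)) \<and>
    \<comment> \<open>TR4: octahedral axiom\<close>
    (\<forall>f g u w v j v' w'. f \<in> Mor C \<and> g \<in> Mor C \<and> cod C f = dom C g \<and>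
        (f, u, w) \<in> tri C \<and> (g, v, j) \<in> tri C \<and> (cmp C g f, v', w') \<in> tri C \<longrightarrow>
        (\<exists>a b. (a, b, cmp C (shM C u) j) \<in> tri C \<and>
           cmp C a u = cmp C v' g \<and> cmp C w' a = w \<and> cmp C b v' = v \<and>
           cmp C j b = cmp C (shM C f) w'))"

definition mdsum :: "('o, 'm, 'e) tricat_scheme \<Rightarrow> 'm \<Rightarrow> 'm \<Rightarrow> 'm" where
  "mdsum C f g = (let X = dom C f; Y = cod C f; Z = dom C g; W = cod C g in
     madd C (cmp C (in1 C Y W) (cmp C f (pr1 C X Z))) (cmp C (in2 C Y W) (cmp C g (pr2 C X Z))))"

text \<open>the matrix ((f, h), (0, g)) : X (+) Z -> Y (+) W for f : X -> Y, g : Z -> W, h : Z -> Y\<close>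
definition mtri :: "('o, 'm, 'e) tricat_scheme \<Rightarrow> 'm \<Rightarrow> 'm \<Rightarrow> 'm \<Rightarrow> 'm" where
  "mtri C f h g = (let X = dom C f; Y = cod C f; Z = dom C g; W = cod C g in
     madd C (mdsum C f g) (cmp C (in1 C Y W) (cmp C h (pr2 C X Z))))"

definition rank_function :: "('o, 'm, 'e) tricat_scheme \<Rightarrow> enat \<Rightarrow> ('m \<Rightarrow> rd) \<Rightarrow> bool" where
  "rank_function C d r \<longleftrightarrow>
    (\<forall>f \<in> Mor C. rd_nonneg d (r f)) \<and>
    (\<forall>f \<in> Mor C. r (shM C f) = rd_q (r f)) \<and>
    (\<forall>f \<in> Mor C. \<forall>g \<in> Mor C. r (mdsum C f g) = rd_add (r f) (r g)) \<and>
    (\<forall>(f, g, h) \<in> tri C. rd_add (r f) (r g) = r (idm C (cod C f))) \<and>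
    (\<forall>f \<in> Mor C. \<forall>g \<in> Mor C. \<forall>h \<in> hom C (dom C g) (cod C f).
        rd_ge d (r (mtri C f h g)) (rd_add (r f) (r g))) \<and>
    (\<forall>f \<in> Mor C. \<forall>g \<in> Mor C. cod C f = dom C g \<longrightarrow>
        rd_ge d (r f) (r (cmp C g f)) \<and> rd_ge d (r g) (r (cmp C g f)))"

definition integral_rank_function :: "('o, 'm, 'e) tricat_scheme \<Rightarrow> enat \<Rightarrow> ('m \<Rightarrow> rd) \<Rightarrow> bool" where
  "integral_rank_function C d r \<longleftrightarrow> rank_function C d r \<and> (\<forall>f \<in> Mor C. rd_int d (r f))"

definition cone :: "('o, 'm, 'e) tricat_scheme \<Rightarrow> 'm \<Rightarrow> 'o" where
  "cone C f = cod C (fst (SOME gh. (f, fst gh, snd gh) \<in> tri C))"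

definition rk_num :: "('o, 'm, 'e) tricat_scheme \<Rightarrow> ('o \<Rightarrow> rd) \<Rightarrow> 'm \<Rightarrow> rd" where
  "rk_num C \<rho> f = rd_add (rd_sub (\<rho> (cod C f)) (\<rho> (cone C f))) (rd_q (\<rho> (dom C f)))"

definition rk_of :: "('o, 'm, 'e) tricat_scheme \<Rightarrow> enat \<Rightarrow> ('o \<Rightarrow> rd) \<Rightarrow> 'm \<Rightarrow> rd" where
  "rk_of C d \<rho> f = (THE r. in_Rd d r \<and> rd_q1 r = rk_num C \<rho> f)"

end

theory Submission
  imports Defs
begin

text \<open>
  Rotating an exact triangle \<open>X \<rightarrow> Y \<rightarrow> Z \<rightarrow> \<Sigma>X\<close> to \<open>Y \<rightarrow> Z \<rightarrow> \<Sigma>X \<rightarrow> \<Sigma>Y\<close>,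
  hypothesis (c) says that \<open>\<rho>(Y) - \<rho>(Z) + q\<rho>(X)\<close> is \<open>q + 1\<close> times a nonnegative element.
  For \<open>d = \<infinity>\<close> or \<open>d\<close> odd, \<open>q + 1\<close> is not a zero divisor in R(d), so the quotient \<open>\<rho>(f)\<close>
  exists, is nonnegative, and (by positivity arguments with the octahedral axiom) does not depend
  on the chosen cone. Additivity \<open>\<rho>(f) + \<rho>(g) = \<rho>(Y)\<close> on triangles and \<open>\<rho>(\<Sigma>f) = q\<rho>(f)\<close>
  are then formal. The octahedral axiom applied to \<open>f\<close>, \<open>g\<close> and \<open>g \<circ> f\<close> gives Sylvester's
  inequality \<open>\<rho>(g \<circ> f) \<ge> \<rho>(f) + \<rho>(g) - \<rho>(Y)\<close>, and every remaining axiom follows from it: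
  \<open>\<rho>(g \<circ> f) \<le> \<rho>(g)\<close> since \<open>g\<close> followed by its cone map vanishes (the other bound by
  rotation), the triangular matrix inequality by factoring
  \<open>[[f, h], [0, g]] = (1 \<oplus> g) \<circ> [[f, h], [0, 1]]\<close>, and additivity on direct sums since
  \<open>(u \<oplus> v) \<circ> (f \<oplus> g) = 0\<close> for the cone maps \<open>u\<close>, \<open>v\<close> of \<open>f\<close>, \<open>g\<close>.
\<close>

section \<open>Additive categories\<close>

definition copair :: "('o, 'm, 'e) tricat_scheme \<Rightarrow> 'o \<Rightarrow> 'o \<Rightarrow> 'm \<Rightarrow> 'm \<Rightarrow> 'm" where
  "copair C A B a b = madd C (cmp C a (pr1 C A B)) (cmp C b (pr2 C A B))"

locale additive_category =
  fixes C :: "('o, 'm, 'e) tricat_scheme"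
  assumes additive: "additive C"
begin

lemma category: "category C"
  using additive unfolding additive_def by blast

lemma mor_in_hom: "f \<in> Mor C \<Longrightarrow> f \<in> hom C (dom C f) (cod C f)"
  and hom_mor: "f \<in> hom C X Y \<Longrightarrow> f \<in> Mor C"
  and hom_dom: "f \<in> hom C X Y \<Longrightarrow> dom C f = X"
  and hom_cod: "f \<in> hom C X Y \<Longrightarrow> cod C f = Y"
  by (simp_all add: hom_def)

lemma hom_dom_ob: "f \<in> hom C X Y \<Longrightarrow> X \<in> Ob C"
  and hom_cod_ob: "f \<in> hom C X Y \<Longrightarrow> Y \<in> Ob C"
  using category unfolding category_def by (auto simp: hom_def)

lemma id_in_hom: "X \<in> Ob C \<Longrightarrow> idm C X \<in> hom C X X"
  using category unfolding category_def by blast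

lemma comp_in_hom: "f \<in> hom C X Y \<Longrightarrow> g \<in> hom C Y Z \<Longrightarrow> cmp C g f \<in> hom C X Z"
  using category unfolding category_def by (simp add: hom_def)

lemma comp_assoc:
  "f \<in> hom C X Y \<Longrightarrow> g \<in> hom C Y Z \<Longrightarrow> h \<in> hom C Z W \<Longrightarrow>
   cmp C (cmp C h g) f = cmp C h (cmp C g f)"
  using category unfolding category_def by (simp add: hom_def)

lemma comp_id_right: "f \<in> hom C X Y \<Longrightarrow> cmp C f (idm C X) = f"
  and comp_id_left: "f \<in> hom C X Y \<Longrightarrow> cmp C (idm C Y) f = f"
  using category unfolding category_def by (auto simp: hom_def)

lemma zero_in_hom: "X \<in> Ob C \<Longrightarrow> Y \<in> Ob C \<Longrightarrow> zer C X Y \<in> hom C X Y"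
  using additive unfolding additive_def by blast

lemma add_in_hom: "f \<in> hom C X Y \<Longrightarrow> g \<in> hom C X Y \<Longrightarrow> madd C f g \<in> hom C X Y"
  and add_commute: "f \<in> hom C X Y \<Longrightarrow> g \<in> hom C X Y \<Longrightarrow> madd C f g = madd C g f"
  and add_assoc: "f \<in> hom C X Y \<Longrightarrow> g \<in> hom C X Y \<Longrightarrow> h \<in> hom C X Y \<Longrightarrow>
    madd C (madd C f g) h = madd C f (madd C g h)"
  and add_zero_right: "f \<in> hom C X Y \<Longrightarrow> madd C f (zer C X Y) = f"
  and neg_in_hom: "f \<in> hom C X Y \<Longrightarrow> mneg C f \<in> hom C X Y"
  and add_neg_right: "f \<in> hom C X Y \<Longrightarrow> madd C f (mneg C f) = zer C X Y"
  using additive hom_dom_ob hom_cod_ob unfolding additive_def by meson+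

lemma comp_add_left:
  "f \<in> hom C X Y \<Longrightarrow> g \<in> hom C Y Z \<Longrightarrow> g' \<in> hom C Y Z \<Longrightarrow>
   cmp C (madd C g g') f = madd C (cmp C g f) (cmp C g' f)"
  and comp_add_right:
  "f \<in> hom C X Y \<Longrightarrow> f' \<in> hom C X Y \<Longrightarrow> g \<in> hom C Y Z \<Longrightarrow>
   cmp C g (madd C f f') = madd C (cmp C g f) (cmp C g f')"
  using additive hom_dom_ob hom_cod_ob unfolding additive_def by meson+

lemma add_zero_left:
  assumes f: "f \<in> hom C X Y"
  shows "madd C (zer C X Y) f = f"
  using add_commute[OF f zero_in_hom[OF hom_dom_ob[OF f] hom_cod_ob[OF f]]] add_zero_right[OF f]
  by simp

lemma add_neg_left: "f \<in> hom C X Y \<Longrightarrow> madd C (mneg C f) f = zer C X Y"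
  using add_commute[OF _ neg_in_hom] add_neg_right by simp

lemma add_idem_imp_zero:
  assumes f: "f \<in> hom C X Y" and idem: "madd C f f = f"
  shows "f = zer C X Y"
proof -
  have "f = madd C f (madd C f (mneg C f))"
    using add_neg_right[OF f] add_zero_right[OF f] by simp
  also have "\<dots> = zer C X Y"
    using add_assoc[OF f f neg_in_hom[OF f]] idem add_neg_right[OF f] by simp
  finally show ?thesis .
qed

lemma neg_unique:
  assumes f: "f \<in> hom C X Y" and g: "g \<in> hom C X Y" and "madd C f g = zer C X Y"
  shows "g = mneg C f"
proof -
  have "g = madd C g (madd C f (mneg C f))"
    using add_neg_right[OF f] add_zero_right[OF g] by simp
  also have "\<dots> = madd C (madd C f g) (mneg C f)"
    using add_assoc[OF g f neg_in_hom[OF f]] add_commute[OF g f] by simp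
  also have "\<dots> = mneg C f"
    using assms(3) add_zero_left[OF neg_in_hom[OF f]] by simp
  finally show ?thesis .
qed

lemma neg_neg: "f \<in> hom C X Y \<Longrightarrow> mneg C (mneg C f) = f"
  using neg_unique[OF neg_in_hom _ add_neg_left] by simp

lemma eq_if_add_neg_eq_zero:
  assumes f: "f \<in> hom C X Y" and g: "g \<in> hom C X Y" and "madd C f (mneg C g) = zer C X Y"
  shows "f = g"
  using neg_unique[OF f neg_in_hom[OF g] assms(3)] neg_neg[OF f] neg_neg[OF g] by simp

lemma add_neg_add_cancel:
  assumes f: "f \<in> hom C X Y" and g: "g \<in> hom C X Y"
  shows "madd C (madd C f (mneg C g)) g = f"
  using add_assoc[OF f neg_in_hom[OF g] g] add_neg_left[OF g] add_zero_right[OF f] by simp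

lemma neg_zero: "X \<in> Ob C \<Longrightarrow> Y \<in> Ob C \<Longrightarrow> mneg C (zer C X Y) = zer C X Y"
  using neg_unique[OF zero_in_hom zero_in_hom add_zero_right[OF zero_in_hom]] by simp

lemma comp_zero_left:
  assumes f: "f \<in> hom C X Y" and Z: "Z \<in> Ob C"
  shows "cmp C (zer C Y Z) f = zer C X Z"
proof -
  have z: "zer C Y Z \<in> hom C Y Z"
    using zero_in_hom[OF hom_cod_ob[OF f] Z] .
  have "cmp C (zer C Y Z) f = madd C (cmp C (zer C Y Z) f) (cmp C (zer C Y Z) f)"
    using comp_add_left[OF f z z] add_zero_right[OF z] by simp
  then show ?thesis
    using add_idem_imp_zero[OF comp_in_hom[OF f z]] by simp
qed

lemma comp_zero_right:
  assumes g: "g \<in> hom C Y Z" and X: "X \<in> Ob C"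
  shows "cmp C g (zer C X Y) = zer C X Z"
proof -
  have z: "zer C X Y \<in> hom C X Y"
    using zero_in_hom[OF X hom_dom_ob[OF g]] .
  have "cmp C g (zer C X Y) = madd C (cmp C g (zer C X Y)) (cmp C g (zer C X Y))"
    using comp_add_right[OF z z g] add_zero_right[OF z] by simp
  then show ?thesis
    using add_idem_imp_zero[OF comp_in_hom[OF z g]] by simp
qed

lemma comp_neg_left:
  assumes f: "f \<in> hom C X Y" and g: "g \<in> hom C Y Z"
  shows "cmp C (mneg C g) f = mneg C (cmp C g f)"
proof -
  have "madd C (cmp C g f) (cmp C (mneg C g) f) = zer C X Z"
    using comp_add_left[OF f g neg_in_hom[OF g]] add_neg_right[OF g]
      comp_zero_left[OF f hom_cod_ob[OF g]] by simp
  then show ?thesis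
    using neg_unique[OF comp_in_hom[OF f g] comp_in_hom[OF f neg_in_hom[OF g]]] by simp
qed

lemma comp_neg_right:
  assumes f: "f \<in> hom C X Y" and g: "g \<in> hom C Y Z"
  shows "cmp C g (mneg C f) = mneg C (cmp C g f)"
proof -
  have "madd C (cmp C g f) (cmp C g (mneg C f)) = zer C X Z"
    using comp_add_right[OF f neg_in_hom[OF f] g] add_neg_right[OF f]
      comp_zero_right[OF g hom_dom_ob[OF f]] by simp
  then show ?thesis
    using neg_unique[OF comp_in_hom[OF f g] comp_in_hom[OF neg_in_hom[OF f] g]] by simp
qed

lemma zero_obj_exists: "\<exists>Z. is_zero_obj C Z"
  using additive unfolding additive_def by blast

lemma zero_obj_ob: "is_zero_obj C Z \<Longrightarrow> Z \<in> Ob C"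
  by (simp add: is_zero_obj_def)

lemma hom_to_zero_obj:
  assumes Z: "is_zero_obj C Z" and f: "f \<in> hom C X Z"
  shows "f = zer C X Z"
  using comp_id_left[OF f] comp_zero_left[OF f zero_obj_ob[OF Z]] Z
  unfolding is_zero_obj_def by simp

lemma is_isoI:
  "f \<in> hom C X Y \<Longrightarrow> g \<in> hom C Y X \<Longrightarrow> cmp C g f = idm C X \<Longrightarrow> cmp C f g = idm C Y \<Longrightarrow>
   is_iso C f"
  unfolding is_iso_def using hom_mor hom_dom hom_cod by metis

lemma is_iso_inverse:
  assumes "is_iso C f" and f: "f \<in> hom C X Y"
  obtains g where "g \<in> hom C Y X" "is_iso C g" "cmp C g f = idm C X" "cmp C f g = idm C Y"
proof -
  obtain g where g: "g \<in> hom C Y X" "cmp C g f = idm C X" "cmp C f g = idm C Y"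
    using assms(1) hom_dom[OF f] hom_cod[OF f] unfolding is_iso_def by auto
  then show thesis
    using that is_isoI[OF g(1) f g(3,2)] by blast
qed

lemma id_is_iso: "X \<in> Ob C \<Longrightarrow> is_iso C (idm C X)"
  using is_isoI[OF id_in_hom id_in_hom] comp_id_left[OF id_in_hom] by blast

lemma zero_obj_zero_is_iso:
  assumes A: "is_zero_obj C A" and B: "is_zero_obj C B"
  shows "is_iso C (zer C A B)"
proof (rule is_isoI)
  have obs: "A \<in> Ob C" "B \<in> Ob C"
    using zero_obj_ob A B by auto
  show "zer C A B \<in> hom C A B" "zer C B A \<in> hom C B A"
    using zero_in_hom obs by auto
  show "cmp C (zer C B A) (zer C A B) = idm C A" "cmp C (zer C A B) (zer C B A) = idm C B"
    using comp_zero_left[OF zero_in_hom] obs A B unfolding is_zero_obj_def by auto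
qed

lemma biproduct:
  assumes "X \<in> Ob C" "Y \<in> Ob C"
  shows "dsum C X Y \<in> Ob C"
    and "in1 C X Y \<in> hom C X (dsum C X Y)" "in2 C X Y \<in> hom C Y (dsum C X Y)"
    and "pr1 C X Y \<in> hom C (dsum C X Y) X" "pr2 C X Y \<in> hom C (dsum C X Y) Y"
    and "cmp C (pr1 C X Y) (in1 C X Y) = idm C X" "cmp C (pr2 C X Y) (in2 C X Y) = idm C Y"
    and "cmp C (pr2 C X Y) (in1 C X Y) = zer C X Y" "cmp C (pr1 C X Y) (in2 C X Y) = zer C Y X"
    and "copair C X Y (in1 C X Y) (in2 C X Y) = idm C (dsum C X Y)"
  using additive assms unfolding additive_def copair_def by blast+

lemma dsum_zero_obj:
  assumes A: "is_zero_obj C A" and B: "is_zero_obj C B"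
  shows "is_zero_obj C (dsum C A B)"
proof -
  have obs: "A \<in> Ob C" "B \<in> Ob C"
    using zero_obj_ob A B by auto
  note bp = biproduct[OF obs]
  have "cmp C (in1 C A B) (pr1 C A B) = zer C (dsum C A B) (dsum C A B)"
    "cmp C (in2 C A B) (pr2 C A B) = zer C (dsum C A B) (dsum C A B)"
    using hom_to_zero_obj[OF A bp(4)] hom_to_zero_obj[OF B bp(5)]
      comp_zero_right[OF bp(2) bp(1)] comp_zero_right[OF bp(3) bp(1)] by simp_all
  then show ?thesis
    using bp(1) bp(10)[unfolded copair_def] add_zero_right[OF zero_in_hom[OF bp(1) bp(1)]] unfolding is_zero_obj_def by simp
qed

lemma biproduct_hom_ext:
  assumes X: "X \<in> Ob C" and Y: "Y \<in> Ob C"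
    and f: "f \<in> hom C (dsum C X Y) Z" and g: "g \<in> hom C (dsum C X Y) Z"
    and "cmp C f (in1 C X Y) = cmp C g (in1 C X Y)" and "cmp C f (in2 C X Y) = cmp C g (in2 C X Y)"
  shows "f = g"
proof -
  note bp = biproduct[OF X Y]
  have decompose: "h = copair C X Y (cmp C h (in1 C X Y)) (cmp C h (in2 C X Y))"
    if h: "h \<in> hom C (dsum C X Y) Z" for h
    unfolding copair_def
    using comp_id_right[OF h] bp(10)[unfolded copair_def]
      comp_add_right[OF comp_in_hom[OF bp(4) bp(2)] comp_in_hom[OF bp(5) bp(3)] h]
      comp_assoc[OF bp(4) bp(2) h] comp_assoc[OF bp(5) bp(3) h] by simp
  show ?thesis
    using decompose[OF f] decompose[OF g] assms(5,6) by simp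
qed

lemma copair_in_hom:
  "a \<in> hom C A M \<Longrightarrow> b \<in> hom C B M \<Longrightarrow> copair C A B a b \<in> hom C (dsum C A B) M"
  unfolding copair_def
  using add_in_hom comp_in_hom biproduct(4,5) hom_dom_ob by metis

lemma copair_comp_in1:
  assumes a: "a \<in> hom C A M" and b: "b \<in> hom C B M"
  shows "cmp C (copair C A B a b) (in1 C A B) = a"
proof -
  have A: "A \<in> Ob C" and B: "B \<in> Ob C"
    using hom_dom_ob[OF a] hom_dom_ob[OF b] .
  note bp = biproduct[OF A B]
  show ?thesis
    unfolding copair_def
    using comp_add_left[OF bp(2) comp_in_hom[OF bp(4) a] comp_in_hom[OF bp(5) b]]
      comp_assoc[OF bp(2) bp(4) a] comp_assoc[OF bp(2) bp(5) b] bp(6,8)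
      comp_id_right[OF a] comp_zero_right[OF b A] add_zero_right[OF a] by simp
qed

lemma copair_comp_in2:
  assumes a: "a \<in> hom C A M" and b: "b \<in> hom C B M"
  shows "cmp C (copair C A B a b) (in2 C A B) = b"
proof -
  have A: "A \<in> Ob C" and B: "B \<in> Ob C"
    using hom_dom_ob[OF a] hom_dom_ob[OF b] .
  note bp = biproduct[OF A B]
  show ?thesis
    unfolding copair_def
    using comp_add_left[OF bp(3) comp_in_hom[OF bp(4) a] comp_in_hom[OF bp(5) b]]
      comp_assoc[OF bp(3) bp(4) a] comp_assoc[OF bp(3) bp(5) b] bp(7,9)
      comp_id_right[OF b] comp_zero_right[OF a B] add_zero_left[OF b] by simp
qed

lemma biproduct_iso:
  assumes a: "a \<in> hom C A M" and b: "b \<in> hom C M B"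
    and r: "r \<in> hom C M A" and s: "s \<in> hom C B M"
    and ra: "cmp C r a = idm C A" and bs: "cmp C b s = idm C B"
    and ba: "cmp C b a = zer C A B" and rs: "cmp C r s = zer C B A"
    and sum: "madd C (cmp C a r) (cmp C s b) = idm C M"
  shows "is_iso C (madd C (cmp C (in1 C A B) r) (cmp C (in2 C A B) b))"
proof -
  have A: "A \<in> Ob C" and B: "B \<in> Ob C"
    using hom_dom_ob[OF a] hom_cod_ob[OF b] by auto
  note bp = biproduct[OF A B]
  define p where "p = madd C (cmp C (in1 C A B) r) (cmp C (in2 C A B) b)"
  have p: "p \<in> hom C M (dsum C A B)"
    unfolding p_def using add_in_hom[OF comp_in_hom[OF r bp(2)] comp_in_hom[OF b bp(3)]] .
  have c: "copair C A B a s \<in> hom C (dsum C A B) M"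
    using copair_in_hom[OF a s] .
  have p_a: "cmp C p a = in1 C A B"
    unfolding p_def
    using comp_add_left[OF a comp_in_hom[OF r bp(2)] comp_in_hom[OF b bp(3)]]
      comp_assoc[OF a r bp(2)] comp_assoc[OF a b bp(3)] ra ba
      comp_id_right[OF bp(2)] comp_zero_right[OF bp(3) A] add_zero_right[OF bp(2)] by simp
  have p_s: "cmp C p s = in2 C A B"
    unfolding p_def
    using comp_add_left[OF s comp_in_hom[OF r bp(2)] comp_in_hom[OF b bp(3)]]
      comp_assoc[OF s r bp(2)] comp_assoc[OF s b bp(3)] rs bs
      comp_id_right[OF bp(3)] comp_zero_right[OF bp(2) B] add_zero_left[OF bp(3)] by simp
  have "cmp C (copair C A B a s) p = idm C M"
    unfolding p_def
    using comp_add_right[OF comp_in_hom[OF r bp(2)] comp_in_hom[OF b bp(3)] c]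
      comp_assoc[OF r bp(2) c] comp_assoc[OF b bp(3) c] copair_comp_in1[OF a s]
      copair_comp_in2[OF a s]
      sum by simp
  moreover have "cmp C p (copair C A B a s) = idm C (dsum C A B)"
    unfolding copair_def
    using comp_add_right[OF comp_in_hom[OF bp(4) a] comp_in_hom[OF bp(5) s] p]
      comp_assoc[OF bp(4) a p] comp_assoc[OF bp(5) s p] p_a p_s bp(10)[unfolded copair_def] by simp
  ultimately show ?thesis
    using is_isoI[OF p c] p_def by blast
qed

lemma section_complement:
  assumes a: "a \<in> hom C A M" and b: "b \<in> hom C M B" and s: "s \<in> hom C B M"
    and bs: "cmp C b s = idm C B"
  defines "e \<equiv> madd C (idm C M) (mneg C (cmp C s b))"
  shows "e \<in> hom C M M" and "cmp C b e = zer C M B" and "cmp C e s = zer C B M"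
    and "cmp C b a = zer C A B \<Longrightarrow> cmp C e a = a"
proof -
  have A: "A \<in> Ob C" and M: "M \<in> Ob C"
    using hom_dom_ob[OF a] hom_cod_ob[OF a] by auto
  have sb: "cmp C s b \<in> hom C M M"
    using comp_in_hom[OF b s] .
  show "e \<in> hom C M M"
    unfolding e_def using add_in_hom[OF id_in_hom[OF M] neg_in_hom[OF sb]] .
  show "cmp C b e = zer C M B"
    unfolding e_def
    using comp_add_right[OF id_in_hom[OF M] neg_in_hom[OF sb] b] comp_id_right[OF b]
      comp_neg_right[OF sb b] comp_assoc[OF b s b] bs comp_id_left[OF b] add_neg_right[OF b] by simp
  show "cmp C e s = zer C B M"
    unfolding e_def
    using comp_add_left[OF s id_in_hom[OF M] neg_in_hom[OF sb]] comp_id_left[OF s]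
      comp_neg_left[OF s sb] comp_assoc[OF s b s] bs comp_id_right[OF s] add_neg_right[OF s] by simp
  show "cmp C e a = a" if ba: "cmp C b a = zer C A B"
    unfolding e_def
    using comp_add_left[OF a id_in_hom[OF M] neg_in_hom[OF sb]] comp_id_left[OF a]
      comp_neg_left[OF a sb] comp_assoc[OF a b s] ba comp_zero_right[OF s A]
      neg_zero[OF A M] add_zero_right[OF a] by simp
qed

lemma mdsum_eq_copair:
  assumes f: "f \<in> hom C X Y" and g: "g \<in> hom C Z W"
  shows "mdsum C f g = copair C X Z (cmp C (in1 C Y W) f) (cmp C (in2 C Y W) g)"
proof -
  have X: "X \<in> Ob C" and Y: "Y \<in> Ob C" and Z: "Z \<in> Ob C" and W: "W \<in> Ob C"
    using hom_dom_ob hom_cod_ob f g by auto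
  note b1 = biproduct[OF X Z] and b2 = biproduct[OF Y W]
  show ?thesis
    unfolding mdsum_def Let_def copair_def
    using hom_dom[OF f] hom_cod[OF f] hom_dom[OF g] hom_cod[OF g]
      comp_assoc[OF b1(4) f b2(2)] comp_assoc[OF b1(5) g b2(3)] by simp
qed

lemma mtri_eq_copair:
  assumes f: "f \<in> hom C X Y" and g: "g \<in> hom C Z W" and h: "h \<in> hom C Z Y"
  shows "mtri C f h g
    = copair C X Z (cmp C (in1 C Y W) f) (madd C (cmp C (in2 C Y W) g) (cmp C (in1 C Y W) h))"
proof -
  have X: "X \<in> Ob C" and Y: "Y \<in> Ob C" and Z: "Z \<in> Ob C" and W: "W \<in> Ob C"
    using hom_dom_ob hom_cod_ob f g by auto
  note b1 = biproduct[OF X Z] and b2 = biproduct[OF Y W]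
  have "mtri C f h g = madd C (mdsum C f g) (cmp C (cmp C (in1 C Y W) h) (pr2 C X Z))"
    unfolding mtri_def Let_def
    using hom_dom[OF f] hom_cod[OF f] hom_dom[OF g] hom_cod[OF g] comp_assoc[OF b1(5) h b2(2)]
      by simp
  also have "\<dots> = copair C X Z (cmp C (in1 C Y W) f)
      (madd C (cmp C (in2 C Y W) g) (cmp C (in1 C Y W) h))"
    unfolding mdsum_eq_copair[OF f g] copair_def
    using add_assoc[OF comp_in_hom[OF b1(4) comp_in_hom[OF f b2(2)]]
        comp_in_hom[OF b1(5) comp_in_hom[OF g b2(3)]]
        comp_in_hom[OF b1(5) comp_in_hom[OF h b2(2)]]]
      comp_add_left[OF b1(5) comp_in_hom[OF g b2(3)] comp_in_hom[OF h b2(2)]] by simp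
  finally show ?thesis .
qed

lemma mdsum_in_hom:
  assumes f: "f \<in> hom C X Y" and g: "g \<in> hom C Z W"
  shows "mdsum C f g \<in> hom C (dsum C X Z) (dsum C Y W)"
proof -
  note b2 = biproduct[OF hom_cod_ob[OF f] hom_cod_ob[OF g]]
  show ?thesis
    using mdsum_eq_copair[OF f g] copair_in_hom[OF comp_in_hom[OF f b2(2)] comp_in_hom[OF g b2(3)]]
      by simp
qed

lemma mtri_in_hom:
  assumes f: "f \<in> hom C X Y" and g: "g \<in> hom C Z W" and h: "h \<in> hom C Z Y"
  shows "mtri C f h g \<in> hom C (dsum C X Z) (dsum C Y W)"
proof -
  note b2 = biproduct[OF hom_cod_ob[OF f] hom_cod_ob[OF g]]
  show ?thesis
    using mtri_eq_copair[OF f g h]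
      copair_in_hom[OF comp_in_hom[OF f b2(2)]
        add_in_hom[OF comp_in_hom[OF g b2(3)] comp_in_hom[OF h b2(2)]]]
    by simp
qed

lemma mdsum_comp_in:
  assumes f: "f \<in> hom C X Y" and g: "g \<in> hom C Z W"
  shows "cmp C (mdsum C f g) (in1 C X Z) = cmp C (in1 C Y W) f"
    and "cmp C (mdsum C f g) (in2 C X Z) = cmp C (in2 C Y W) g"
proof -
  note b2 = biproduct[OF hom_cod_ob[OF f] hom_cod_ob[OF g]]
  show "cmp C (mdsum C f g) (in1 C X Z) = cmp C (in1 C Y W) f"
    "cmp C (mdsum C f g) (in2 C X Z) = cmp C (in2 C Y W) g"
    using mdsum_eq_copair[OF f g]
      copair_comp_in1[OF comp_in_hom[OF f b2(2)] comp_in_hom[OF g b2(3)]]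
      copair_comp_in2[OF comp_in_hom[OF f b2(2)] comp_in_hom[OF g b2(3)]] by simp_all
qed

lemma mtri_comp_in:
  assumes f: "f \<in> hom C X Y" and g: "g \<in> hom C Z W" and h: "h \<in> hom C Z Y"
  shows "cmp C (mtri C f h g) (in1 C X Z) = cmp C (in1 C Y W) f"
    and "cmp C (mtri C f h g) (in2 C X Z) = madd C (cmp C (in2 C Y W) g) (cmp C (in1 C Y W) h)"
proof -
  note b2 = biproduct[OF hom_cod_ob[OF f] hom_cod_ob[OF g]]
  have "madd C (cmp C (in2 C Y W) g) (cmp C (in1 C Y W) h) \<in> hom C Z (dsum C Y W)"
    using add_in_hom[OF comp_in_hom[OF g b2(3)] comp_in_hom[OF h b2(2)]] .
  then show "cmp C (mtri C f h g) (in1 C X Z) = cmp C (in1 C Y W) f"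
    "cmp C (mtri C f h g) (in2 C X Z) = madd C (cmp C (in2 C Y W) g) (cmp C (in1 C Y W) h)"
    using mtri_eq_copair[OF f g h] copair_comp_in1[OF comp_in_hom[OF f b2(2)]]
      copair_comp_in2[OF comp_in_hom[OF f b2(2)]] by simp_all
qed

lemma mtri_zero:
  assumes f: "f \<in> hom C X Y" and g: "g \<in> hom C Z W"
  shows "mtri C f (zer C Z Y) g = mdsum C f g"
proof -
  have Y: "Y \<in> Ob C" and Z: "Z \<in> Ob C" and W: "W \<in> Ob C"
    using hom_cod_ob[OF f] hom_dom_ob[OF g] hom_cod_ob[OF g] by auto
  have "cmp C (in1 C Y W) (zer C Z Y) = zer C Z (dsum C Y W)"
    using comp_zero_right[OF biproduct(2)[OF Y W] Z] .
  then show ?thesis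
    using mtri_eq_copair[OF f g zero_in_hom[OF Z Y]] mdsum_eq_copair[OF f g]
      add_zero_right[OF comp_in_hom[OF g biproduct(3)[OF Y W]]] by simp
qed

lemma mdsum_id_comp_mtri_id:
  assumes f: "f \<in> hom C X Y" and g: "g \<in> hom C Z W" and h: "h \<in> hom C Z Y"
  shows "cmp C (mdsum C (idm C Y) g) (mtri C f h (idm C Z)) = mtri C f h g"
proof -
  have X: "X \<in> Ob C" and Y: "Y \<in> Ob C" and Z: "Z \<in> Ob C" and W: "W \<in> Ob C"
    using hom_dom_ob hom_cod_ob f g by auto
  note b1 = biproduct[OF X Z] and b2 = biproduct[OF Y Z] and b3 = biproduct[OF Y W]
  note N = mtri_in_hom[OF f id_in_hom[OF Z] h] and N_in = mtri_comp_in[OF f id_in_hom[OF Z] h]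
  note D = mdsum_in_hom[OF id_in_hom[OF Y] g] and D_in = mdsum_comp_in[OF id_in_hom[OF Y] g]
  show ?thesis
  proof (rule biproduct_hom_ext[OF X Z comp_in_hom[OF N D] mtri_in_hom[OF f g h]])
    show "cmp C (cmp C (mdsum C (idm C Y) g) (mtri C f h (idm C Z))) (in1 C X Z)
        = cmp C (mtri C f h g) (in1 C X Z)"
      using comp_assoc[OF b1(2) N D] N_in(1) comp_assoc[OF f b2(2) D, symmetric] D_in(1)
        comp_id_right[OF b3(2)] mtri_comp_in(1)[OF f g h] by simp
    show "cmp C (cmp C (mdsum C (idm C Y) g) (mtri C f h (idm C Z))) (in2 C X Z)
        = cmp C (mtri C f h g) (in2 C X Z)"
      using comp_assoc[OF b1(3) N D] N_in(2)
        comp_add_right[OF comp_in_hom[OF id_in_hom[OF Z] b2(3)] comp_in_hom[OF h b2(2)] D]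
        comp_assoc[OF id_in_hom[OF Z] b2(3) D, symmetric] comp_assoc[OF h b2(2) D, symmetric] D_in
        comp_id_right[OF comp_in_hom[OF g b3(3)]] comp_id_right[OF b3(2)] mtri_comp_in(2)[OF f g h]
        by simp
  qed
qed

lemma mdsum_comp_eq_zero:
  assumes f: "f \<in> hom C X Y" and g: "g \<in> hom C Z W" and u: "u \<in> hom C Y A" and v: "v \<in> hom C W B"
    and uf: "cmp C u f = zer C X A" and vg: "cmp C v g = zer C Z B"
  shows "cmp C (mdsum C u v) (mdsum C f g) = zer C (dsum C X Z) (dsum C A B)"
proof -
  have X: "X \<in> Ob C" and Y: "Y \<in> Ob C" and Z: "Z \<in> Ob C" and W: "W \<in> Ob C"
    and A: "A \<in> Ob C" and B: "B \<in> Ob C"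
    using hom_dom_ob hom_cod_ob f g u v by auto
  note b1 = biproduct[OF X Z] and b2 = biproduct[OF Y W] and b3 = biproduct[OF A B]
  note F = mdsum_in_hom[OF f g] and U = mdsum_in_hom[OF u v]
  note F_in = mdsum_comp_in[OF f g] and U_in = mdsum_comp_in[OF u v]
  show ?thesis
  proof (rule biproduct_hom_ext[OF X Z comp_in_hom[OF F U] zero_in_hom[OF b1(1) b3(1)]])
    show "cmp C (cmp C (mdsum C u v) (mdsum C f g)) (in1 C X Z)
        = cmp C (zer C (dsum C X Z) (dsum C A B)) (in1 C X Z)"
      using comp_assoc[OF b1(2) F U] F_in(1) comp_assoc[OF f b2(2) U, symmetric] U_in(1)
        comp_assoc[OF f u b3(2)] uf comp_zero_right[OF b3(2) X] comp_zero_left[OF b1(2) b3(1)]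
        by simp
    show "cmp C (cmp C (mdsum C u v) (mdsum C f g)) (in2 C X Z)
        = cmp C (zer C (dsum C X Z) (dsum C A B)) (in2 C X Z)"
      using comp_assoc[OF b1(3) F U] F_in(2) comp_assoc[OF g b2(3) U, symmetric] U_in(2)
        comp_assoc[OF g v b3(3)] vg comp_zero_right[OF b3(3) Z] comp_zero_left[OF b1(3) b3(1)]
        by simp
  qed
qed

lemma mtri_id_annihilator:
  assumes f: "f \<in> hom C X Y" and h: "h \<in> hom C Z Y" and u: "u \<in> hom C (dsum C Y Z) V"
    and uN: "cmp C u (mtri C f h (idm C Z)) = zer C (dsum C X Z) V"
  shows "cmp C (cmp C u (in1 C Y Z)) f = zer C X V"
    and "u = cmp C (cmp C u (in1 C Y Z)) (copair C Y Z (idm C Y) (mneg C h))"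
proof -
  have X: "X \<in> Ob C" and Y: "Y \<in> Ob C" and Z: "Z \<in> Ob C" and V: "V \<in> Ob C"
    using hom_dom_ob[OF f] hom_cod_ob[OF f] hom_dom_ob[OF h] hom_cod_ob[OF u] by auto
  note b1 = biproduct[OF X Z] and b2 = biproduct[OF Y Z]
  note N = mtri_in_hom[OF f id_in_hom[OF Z] h]
  have N_in: "cmp C (mtri C f h (idm C Z)) (in1 C X Z) = cmp C (in1 C Y Z) f"
    "cmp C (mtri C f h (idm C Z)) (in2 C X Z) = madd C (in2 C Y Z) (cmp C (in1 C Y Z) h)"
    using mtri_comp_in[OF f id_in_hom[OF Z] h] comp_id_right[OF b2(3)] by simp_all
  define x y where "x = cmp C u (in1 C Y Z)" "y = cmp C u (in2 C Y Z)"
  have x: "x \<in> hom C Y V" and y: "y \<in> hom C Z V"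
    unfolding x_y_def using comp_in_hom[OF b2(2) u] comp_in_hom[OF b2(3) u] by auto
  have kill: "cmp C u (cmp C (mtri C f h (idm C Z)) i) = zer C T V"
    if "i \<in> hom C T (dsum C X Z)" for i T
    using comp_assoc[OF that N u] uN comp_zero_left[OF that V] by simp
  show "cmp C x f = zer C X V"
    unfolding x_y_def using kill[OF b1(2)] comp_assoc[OF f b2(2) u] N_in(1) by simp
  have "madd C y (cmp C x h) = zer C Z V"
    using kill[OF b1(3)] N_in(2) comp_add_right[OF b2(3) comp_in_hom[OF h b2(2)] u]
      comp_assoc[OF h b2(2) u] x_y_def by simp
  then have y_eq: "y = mneg C (cmp C x h)"
    using neg_unique[OF comp_in_hom[OF h x] y] add_commute[OF y comp_in_hom[OF h x]] by simp
  define E where "E = copair C Y Z (idm C Y) (mneg C h)"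
  have E: "E \<in> hom C (dsum C Y Z) Y"
    unfolding E_def using copair_in_hom[OF id_in_hom[OF Y] neg_in_hom[OF h]] .
  have "u = cmp C x E"
  proof (rule biproduct_hom_ext[OF Y Z u comp_in_hom[OF E x]])
    show "cmp C u (in1 C Y Z) = cmp C (cmp C x E) (in1 C Y Z)"
      using comp_assoc[OF b2(2) E x] copair_comp_in1[OF id_in_hom[OF Y] neg_in_hom[OF h]]
        comp_id_right[OF x] x_y_def E_def by simp
    show "cmp C u (in2 C Y Z) = cmp C (cmp C x E) (in2 C Y Z)"
      using comp_assoc[OF b2(3) E x] copair_comp_in2[OF id_in_hom[OF Y] neg_in_hom[OF h]]
        comp_neg_right[OF h x] y_eq x_y_def E_def by simp
  qed
  then show "u = cmp C (cmp C u (in1 C Y Z)) (copair C Y Z (idm C Y) (mneg C h))"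
    unfolding x_y_def E_def .
qed

lemma mdsum_id_annihilator:
  assumes Y: "Y \<in> Ob C" and g: "g \<in> hom C Z W" and u: "u \<in> hom C (dsum C Y W) V"
    and uD: "cmp C u (mdsum C (idm C Y) g) = zer C (dsum C Y Z) V"
  shows "cmp C (cmp C u (in2 C Y W)) g = zer C Z V"
    and "u = cmp C (cmp C u (in2 C Y W)) (pr2 C Y W)"
proof -
  have Z: "Z \<in> Ob C" and W: "W \<in> Ob C" and V: "V \<in> Ob C"
    using hom_dom_ob[OF g] hom_cod_ob[OF g] hom_cod_ob[OF u] by auto
  note b1 = biproduct[OF Y Z] and b2 = biproduct[OF Y W]
  note D = mdsum_in_hom[OF id_in_hom[OF Y] g]
  have D_in: "cmp C (mdsum C (idm C Y) g) (in1 C Y Z) = in1 C Y W"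
    "cmp C (mdsum C (idm C Y) g) (in2 C Y Z) = cmp C (in2 C Y W) g"
    using mdsum_comp_in[OF id_in_hom[OF Y] g] comp_id_right[OF b2(2)] by simp_all
  define y where "y = cmp C u (in2 C Y W)"
  have y: "y \<in> hom C W V"
    unfolding y_def using comp_in_hom[OF b2(3) u] .
  have kill: "cmp C u (cmp C (mdsum C (idm C Y) g) i) = zer C T V"
    if "i \<in> hom C T (dsum C Y Z)" for i T
    using comp_assoc[OF that D u] uD comp_zero_left[OF that V] by simp
  show "cmp C y g = zer C Z V"
    unfolding y_def using kill[OF b1(3)] comp_assoc[OF g b2(3) u] D_in(2) by simp
  have u_in1: "cmp C u (in1 C Y W) = zer C Y V"
    using kill[OF b1(2)] D_in(1) by simp
  have "u = cmp C y (pr2 C Y W)"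
  proof (rule biproduct_hom_ext[OF Y W u comp_in_hom[OF b2(5) y]])
    show "cmp C u (in1 C Y W) = cmp C (cmp C y (pr2 C Y W)) (in1 C Y W)"
      using u_in1 comp_assoc[OF b2(2) b2(5) y] b2(8) comp_zero_right[OF y Y] by simp
    show "cmp C u (in2 C Y W) = cmp C (cmp C y (pr2 C Y W)) (in2 C Y W)"
      using comp_assoc[OF b2(3) b2(5) y] b2(7) comp_id_right[OF y] y_def by simp
  qed
  then show "u = cmp C (cmp C u (in2 C Y W)) (pr2 C Y W)"
    unfolding y_def .
qed

end

section \<open>Triangulated categories\<close>

locale triangulated_category =
  fixes C :: "('o, 'm, 'e) tricat_scheme"
  assumes triangulated: "triangulated C"
begin

sublocale additive_category
  using triangulated by unfold_locales (simp add: triangulated_def)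

lemma translation: "translation C"
  using triangulated by (simp add: triangulated_def)

lemma shift_ob: "X \<in> Ob C \<Longrightarrow> shO C X \<in> Ob C"
  and shift_id: "X \<in> Ob C \<Longrightarrow> shM C (idm C X) = idm C (shO C X)"
  using translation unfolding translation_def by blast+

lemma shift_in_hom: "f \<in> hom C X Y \<Longrightarrow> shM C f \<in> hom C (shO C X) (shO C Y)"
  using translation unfolding translation_def hom_def by blast

lemma shift_comp: "f \<in> hom C X Y \<Longrightarrow> g \<in> hom C Y Z \<Longrightarrow> shM C (cmp C g f) = cmp C (shM C g) (shM C f)"
  using translation unfolding translation_def by (simp add: hom_def)

lemma shift_add: "f \<in> hom C X Y \<Longrightarrow> g \<in> hom C X Y \<Longrightarrow> shM C (madd C f g) = madd C (shM C f) (shM C g)"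
  using translation hom_dom_ob hom_cod_ob unfolding translation_def by blast

lemma shift_bij: "X \<in> Ob C \<Longrightarrow> Y \<in> Ob C \<Longrightarrow> bij_betw (shM C) (hom C X Y) (hom C (shO C X) (shO C Y))"
  using translation unfolding translation_def by blast

lemma shift_zero:
  assumes "X \<in> Ob C" "Y \<in> Ob C"
  shows "shM C (zer C X Y) = zer C (shO C X) (shO C Y)"
proof -
  have z: "zer C X Y \<in> hom C X Y"
    using zero_in_hom[OF assms] .
  have "madd C (shM C (zer C X Y)) (shM C (zer C X Y)) = shM C (zer C X Y)"
    using shift_add[OF z z] add_zero_right[OF z] by simp
  then show ?thesis
    using add_idem_imp_zero[OF shift_in_hom[OF z]] by simp
qed

lemma shift_surj:
  assumes "X \<in> Ob C" "Y \<in> Ob C" "c \<in> hom C (shO C X) (shO C Y)"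
  obtains f where "f \<in> hom C X Y" "shM C f = c"
proof -
  have "c \<in> shM C ` hom C X Y"
    using shift_bij[OF assms(1,2)] assms(3) unfolding bij_betw_def by simp
  then show thesis
    using that by blast
qed

lemma shift_inj:
  assumes f: "f \<in> hom C X Y" and g: "g \<in> hom C X Y" and "shM C f = shM C g"
  shows "f = g"
proof -
  have "inj_on (shM C) (hom C X Y)"
    using shift_bij[OF hom_dom_ob[OF f] hom_cod_ob[OF f]] unfolding bij_betw_def by simp
  then show ?thesis
    using assms unfolding inj_on_def by blast
qed

lemma shift_reflects_factorization:
  assumes x: "x \<in> hom C T Y" and f: "f \<in> hom C X Y" and c: "c \<in> hom C (shO C T) (shO C X)"
    and "shM C x = cmp C (shM C f) c"
  obtains y where "y \<in> hom C T X" "cmp C f y = x"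
proof -
  obtain y where y: "y \<in> hom C T X" "shM C y = c"
    using shift_surj[OF hom_dom_ob[OF x] hom_dom_ob[OF f] c] by blast
  then have "shM C x = shM C (cmp C f y)"
    using assms(4) shift_comp[OF y(1) f] by simp
  then show thesis
    using that y(1) shift_inj[OF x comp_in_hom[OF y(1) f]] by simp
qed

lemma tri_hom:
  assumes "(f, g, h) \<in> tri C"
  shows "f \<in> hom C (dom C f) (cod C f)" "g \<in> hom C (cod C f) (cod C g)"
    "h \<in> hom C (cod C g) (shO C (dom C f))"
proof -
  have "\<forall>(f, g, h) \<in> tri C. is_tri_shape C f g h"
    using triangulated unfolding triangulated_def by (elim conjE) assumption
  then have "is_tri_shape C f g h"
    using assms by blast
  then show "f \<in> hom C (dom C f) (cod C f)" "g \<in> hom C (cod C f) (cod C g)"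
    "h \<in> hom C (cod C g) (shO C (dom C f))"
    unfolding is_tri_shape_def hom_def by auto
qed

lemma tri_rotate:
  assumes t: "(f, g, h) \<in> tri C"
  shows "(g, h, mneg C (shM C f)) \<in> tri C"
proof -
  have "\<forall>f g h. is_tri_shape C f g h \<longrightarrow> ((f, g, h) \<in> tri C \<longleftrightarrow> (g, h, mneg C (shM C f)) \<in> tri C)"
    using triangulated unfolding triangulated_def by (elim conjE) assumption
  moreover have "is_tri_shape C f g h"
    using tri_hom[OF t] unfolding is_tri_shape_def hom_def by auto
  ultimately show ?thesis
    using t by blast
qed

lemma tri_id:
  assumes "X \<in> Ob C" "is_zero_obj C Z"
  shows "(idm C X, zer C X Z, zer C Z (shO C X)) \<in> tri C"
proof -
  have "\<forall>X \<in> Ob C. \<forall>Z. is_zero_obj C Z \<longrightarrow> (idm C X, zer C X Z, zer C Z (shO C X)) \<in> tri C"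
    using triangulated unfolding triangulated_def by (elim conjE) assumption
  then show ?thesis
    using assms by blast
qed

lemma tri_exists:
  assumes "f \<in> Mor C"
  obtains g h where "(f, g, h) \<in> tri C"
proof -
  have "\<forall>f \<in> Mor C. \<exists>g h. (f, g, h) \<in> tri C"
    using triangulated unfolding triangulated_def by (elim conjE) assumption
  then show thesis
    using assms that by blast
qed

lemma tri_iso_closed:
  assumes "T \<in> tri C" "is_tri_shape C f' g' h'" "tri_mor C T (f', g', h') a b c"
    and "is_iso C a" "is_iso C b" "is_iso C c"
  shows "(f', g', h') \<in> tri C"
proof -
  have "\<forall>T \<in> tri C. \<forall>f' g' h' a b c. is_tri_shape C f' g' h' \<and> tri_mor C T (f', g', h') a b c \<and>
      is_iso C a \<and> is_iso C b \<and> is_iso C c \<longrightarrow> (f', g', h') \<in> tri C"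
    using triangulated unfolding triangulated_def by (elim conjE) assumption
  then show ?thesis
    using assms by blast
qed

lemma tri_mor_complete:
  assumes "(f, g, h) \<in> tri C" "(f', g', h') \<in> tri C"
    and "a \<in> hom C (dom C f) (dom C f')" "b \<in> hom C (dom C g) (dom C g')"
    and "cmp C b f = cmp C f' a"
  obtains c where "c \<in> hom C (dom C h) (dom C h')"
    "cmp C c g = cmp C g' b" "cmp C (shM C a) h = cmp C h' c"
proof -
  have "\<forall>f g h f' g' h' a b. (f, g, h) \<in> tri C \<and> (f', g', h') \<in> tri C \<and>
      a \<in> hom C (dom C f) (dom C f') \<and> b \<in> hom C (dom C g) (dom C g') \<and>
      cmp C b f = cmp C f' a \<longrightarrow> (\<exists>c. tri_mor C (f, g, h) (f', g', h') a b c)"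
    using triangulated unfolding triangulated_def by (elim conjE) assumption
  then have "\<exists>c. tri_mor C (f, g, h) (f', g', h') a b c"
    using assms by blast
  then show thesis
    using that unfolding tri_mor_def by auto
qed

lemma octahedral:
  assumes "f \<in> hom C X Y" "g \<in> hom C Y Z"
    and "(f, u, w) \<in> tri C" "(g, v, j) \<in> tri C" "(cmp C g f, v', w') \<in> tri C"
  obtains a b where "(a, b, cmp C (shM C u) j) \<in> tri C"
    "cmp C a u = cmp C v' g" "cmp C w' a = w" "cmp C b v' = v" "cmp C j b = cmp C (shM C f) w'"
proof -
  have "\<forall>f g u w v j v' w'. f \<in> Mor C \<and> g \<in> Mor C \<and> cod C f = dom C g \<and>
      (f, u, w) \<in> tri C \<and> (g, v, j) \<in> tri C \<and> (cmp C g f, v', w') \<in> tri C \<longrightarrow>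
      (\<exists>a b. (a, b, cmp C (shM C u) j) \<in> tri C \<and>
         cmp C a u = cmp C v' g \<and> cmp C w' a = w \<and> cmp C b v' = v \<and>
         cmp C j b = cmp C (shM C f) w')"
    using triangulated unfolding triangulated_def by (elim conjE) assumption
  moreover have "f \<in> Mor C" "g \<in> Mor C" "cod C f = dom C g"
    using assms(1,2) by (auto simp: hom_def)
  ultimately show thesis
    using assms(3-5) that by blast
qed

lemma tri_comp_zero:
  assumes t: "(f, g, h) \<in> tri C"
  shows "cmp C g f = zer C (dom C f) (cod C g)"
proof -
  obtain Z where Z: "is_zero_obj C Z"
    using zero_obj_exists by blast
  note H = tri_hom[OF t]
  define X where "X = dom C f"
  have X: "X \<in> Ob C"
    using hom_dom_ob[OF H(1)] X_def by simp
  have Z_ob: "Z \<in> Ob C" and SX: "shO C X \<in> Ob C"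
    using zero_obj_ob[OF Z] shift_ob[OF X] by auto
  obtain c where c: "c \<in> hom C (dom C (zer C Z (shO C X))) (dom C h)"
    "cmp C c (zer C X Z) = cmp C g f"
  proof (rule tri_mor_complete[OF tri_id[OF X Z] t, of "idm C X" f])
    show "idm C X \<in> hom C (dom C (idm C X)) (dom C f)"
      using id_in_hom[OF X] hom_dom[OF id_in_hom[OF X]] X_def by simp
    show "f \<in> hom C (dom C (zer C X Z)) (dom C g)"
      using H(1,2) hom_dom[OF zero_in_hom[OF X Z_ob]] hom_dom X_def by metis
  qed simp
  have "c \<in> hom C Z (cod C g)"
    using c(1) hom_dom[OF zero_in_hom[OF Z_ob SX]] hom_dom[OF H(3)] by simp
  then show ?thesis
    using c(2) comp_zero_right[OF _ X] X_def by simp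
qed

lemma tri_weak_kernel:
  assumes t: "(f, g, h) \<in> tri C" and x: "x \<in> hom C T (cod C f)"
    and gx: "cmp C g x = zer C T (cod C g)"
  obtains y where "y \<in> hom C T (dom C f)" "cmp C f y = x"
proof -
  obtain Z where Z: "is_zero_obj C Z"
    using zero_obj_exists by blast
  note H = tri_hom[OF t]
  define X Y W where "X = dom C f" "Y = cod C f" "W = cod C g"
  have f: "f \<in> hom C X Y" and g: "g \<in> hom C Y W" and h: "h \<in> hom C W (shO C X)"
    using H X_Y_W_def by auto
  have T: "T \<in> Ob C" and X: "X \<in> Ob C" and W: "W \<in> Ob C" and Z_ob: "Z \<in> Ob C"
    using hom_dom_ob[OF x] hom_dom_ob[OF f] hom_cod_ob[OF g] zero_obj_ob[OF Z] by auto
  have ST: "shO C T \<in> Ob C"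
    using shift_ob[OF T] .
  have zero_tri: "(zer C T Z, zer C Z (shO C T), mneg C (idm C (shO C T))) \<in> tri C"
    using tri_rotate[OF tri_id[OF T Z]] shift_id[OF T] by simp
  obtain c where c: "c \<in> hom C (dom C (mneg C (idm C (shO C T)))) (dom C (mneg C (shM C f)))"
    "cmp C (shM C x) (mneg C (idm C (shO C T))) = cmp C (mneg C (shM C f)) c"
  proof (rule tri_mor_complete[OF zero_tri tri_rotate[OF t], of x "zer C Z W"])
    show "x \<in> hom C (dom C (zer C T Z)) (dom C g)"
      using x hom_dom[OF zero_in_hom[OF T Z_ob]] hom_dom[OF g] X_Y_W_def by simp
    show "zer C Z W \<in> hom C (dom C (zer C Z (shO C T))) (dom C h)"
      using zero_in_hom[OF Z_ob W] hom_dom[OF zero_in_hom[OF Z_ob ST]] hom_dom[OF h] by simp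
    show "cmp C (zer C Z W) (zer C T Z) = cmp C g x"
      using comp_zero_left[OF zero_in_hom[OF T Z_ob] W] gx X_Y_W_def by simp
  qed
  have c_hom: "c \<in> hom C (shO C T) (shO C X)"
    using c(1) hom_dom[OF neg_in_hom[OF id_in_hom[OF ST]]]
      hom_dom[OF neg_in_hom[OF shift_in_hom[OF f]]]
    by simp
  have sx: "shM C x \<in> hom C (shO C T) (shO C Y)"
    using shift_in_hom[OF x] X_Y_W_def by simp
  have "mneg C (shM C x) = mneg C (cmp C (shM C f) c)"
    using c(2) comp_neg_right[OF id_in_hom[OF ST] sx] comp_id_right[OF sx]
      comp_neg_left[OF c_hom shift_in_hom[OF f]] by simp
  then have "shM C x = cmp C (shM C f) c"
    using neg_neg[OF sx] neg_neg[OF comp_in_hom[OF c_hom shift_in_hom[OF f]]] by metis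
  then show thesis
    using shift_reflects_factorization[OF x[folded X_Y_W_def] f c_hom] that X_Y_W_def by blast
qed

lemma tri_of_iso:
  assumes e: "e \<in> hom C M N" and "is_iso C e" and Z: "is_zero_obj C Z"
  shows "(e, zer C N Z, zer C Z (shO C M)) \<in> tri C"
proof (rule tri_iso_closed[OF tri_id])
  have M: "M \<in> Ob C" and N: "N \<in> Ob C" and Z_ob: "Z \<in> Ob C" and SM: "shO C M \<in> Ob C"
    using hom_dom_ob[OF e] hom_cod_ob[OF e] zero_obj_ob[OF Z] shift_ob hom_dom_ob[OF e] by auto
  then show "M \<in> Ob C" "is_zero_obj C Z" "is_iso C (idm C M)" "is_iso C e" "is_iso C (idm C Z)"
    using id_is_iso assms by auto
  show "is_tri_shape C e (zer C N Z) (zer C Z (shO C M))"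
    using e zero_in_hom[OF N Z_ob] zero_in_hom[OF Z_ob SM] unfolding is_tri_shape_def hom_def
      by auto
  show "tri_mor C (idm C M, zer C M Z, zer C Z (shO C M)) (e, zer C N Z, zer C Z (shO C M))
      (idm C M) e (idm C Z)"
    unfolding tri_mor_def
    using id_in_hom[OF M] id_in_hom[OF Z_ob] e hom_dom[OF id_in_hom[OF M]] hom_dom[OF e]
      hom_dom[OF zero_in_hom[OF M Z_ob]] hom_dom[OF zero_in_hom[OF N Z_ob]]
      hom_dom[OF zero_in_hom[OF Z_ob SM]] comp_id_left[OF zero_in_hom[OF M Z_ob]]
      comp_zero_left[OF e Z_ob] shift_id[OF M] comp_id_left[OF zero_in_hom[OF Z_ob SM]]
      comp_id_right[OF zero_in_hom[OF Z_ob SM]] comp_id_right[OF e]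
    by simp
qed

lemma tri_zero_connecting_mono:
  assumes t: "(a, b, zer C (cod C b) (shO C (dom C a))) \<in> tri C"
    and x: "x \<in> hom C T (dom C a)" and ax: "cmp C a x = zer C T (cod C a)"
  shows "x = zer C T (dom C a)"
proof -
  define A M B where "A = dom C a" "M = cod C a" "B = cod C b"
  note H = tri_hom[OF t]
  have a: "a \<in> hom C A M" and b: "b \<in> hom C M B"
    using H A_M_B_def by auto
  have T: "T \<in> Ob C" and A: "A \<in> Ob C" and M: "M \<in> Ob C" and B: "B \<in> Ob C"
    using hom_dom_ob[OF x] hom_dom_ob[OF a] hom_cod_ob[OF a] hom_cod_ob[OF b] by auto
  have t2: "(zer C B (shO C A), mneg C (shM C a), mneg C (shM C b)) \<in> tri C"
    using tri_rotate[OF tri_rotate[OF t]] A_M_B_def by simp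
  have sx: "shM C x \<in> hom C (shO C T) (shO C A)"
    using shift_in_hom[OF x] A_M_B_def by simp
  have "cmp C (mneg C (shM C a)) (shM C x) = zer C (shO C T) (shO C M)"
    using comp_neg_left[OF sx shift_in_hom[OF a]] shift_comp[OF x[folded A_M_B_def] a]
      ax[folded A_M_B_def]
      shift_zero[OF T M] neg_zero[OF shift_ob[OF T] shift_ob[OF M]] by simp
  then obtain y where y: "y \<in> hom C (shO C T) B" "cmp C (zer C B (shO C A)) y = shM C x"
    using tri_weak_kernel[OF t2, of "shM C x"] sx hom_dom[OF zero_in_hom[OF B shift_ob[OF A]]]
      hom_cod[OF zero_in_hom[OF B shift_ob[OF A]]] hom_cod[OF neg_in_hom[OF shift_in_hom[OF a]]]
    by auto
  then have "shM C x = shM C (zer C T A)"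
    using comp_zero_left[OF y(1) shift_ob[OF A]] shift_zero[OF T A] by simp
  then show ?thesis
    using shift_inj[OF _ zero_in_hom[OF T A]] x A_M_B_def by simp
qed

lemma tri_zero_connecting_section:
  assumes t: "(a, b, zer C (cod C b) (shO C (dom C a))) \<in> tri C"
  obtains s where "s \<in> hom C (cod C b) (cod C a)" "cmp C b s = idm C (cod C b)"
proof -
  define A B where "A = dom C a" "B = cod C b"
  note H = tri_hom[OF t]
  have A: "A \<in> Ob C" and B: "B \<in> Ob C"
    using hom_dom_ob[OF H(1)] hom_cod_ob[OF H(2)] A_B_def by auto
  have t': "(b, zer C B (shO C A), mneg C (shM C a)) \<in> tri C"
    using tri_rotate[OF t] A_B_def by simp
  have "idm C B \<in> hom C B (cod C b)"
    using id_in_hom[OF B] A_B_def by simp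
  moreover have "cmp C (zer C B (shO C A)) (idm C B) = zer C B (cod C (zer C B (shO C A)))"
    using comp_id_right[OF zero_in_hom[OF B shift_ob[OF A]]]
      hom_cod[OF zero_in_hom[OF B shift_ob[OF A]]]
    by simp
  ultimately obtain s where "s \<in> hom C B (dom C b)" "cmp C b s = idm C B"
    by (rule tri_weak_kernel[OF t'])
  then show thesis
    using that hom_dom[OF H(2)] A_B_def by simp
qed

lemma tri_zero_connecting_retraction:
  assumes t: "(a, b, zer C (cod C b) (shO C (dom C a))) \<in> tri C"
    and s: "s \<in> hom C (cod C b) (cod C a)" and bs: "cmp C b s = idm C (cod C b)"
  obtains r where "r \<in> hom C (cod C a) (dom C a)" "cmp C r a = idm C (dom C a)"
    "cmp C r s = zer C (cod C b) (dom C a)" "madd C (cmp C a r) (cmp C s b) = idm C (cod C a)"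
proof -
  define A M B where "A = dom C a" "M = cod C a" "B = cod C b"
  note H = tri_hom[OF t]
  have a: "a \<in> hom C A M" and b: "b \<in> hom C M B" and s: "s \<in> hom C B M"
    using H s A_M_B_def by auto
  have A: "A \<in> Ob C" and M: "M \<in> Ob C"
    using hom_dom_ob[OF a] hom_cod_ob[OF a] by auto
  define e where "e = madd C (idm C M) (mneg C (cmp C s b))"
  note e = section_complement[OF a b s bs[folded A_M_B_def], folded e_def]
  note mono = tri_zero_connecting_mono[OF t, folded A_M_B_def]
  have ba: "cmp C b a = zer C A B"
    using tri_comp_zero[OF t] A_M_B_def by simp
  obtain r where r: "r \<in> hom C M A" "cmp C a r = e"
    using tri_weak_kernel[OF t, of e M] e(1,2) A_M_B_def by metis
  have "cmp C a (madd C (cmp C r a) (mneg C (idm C A))) = zer C A M"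
    using comp_add_right[OF comp_in_hom[OF a r(1)] neg_in_hom[OF id_in_hom[OF A]] a]
      comp_assoc[OF a r(1) a] r(2) e(4)[OF ba] comp_neg_right[OF id_in_hom[OF A] a]
      comp_id_right[OF a]
      add_neg_right[OF a] by simp
  then have "cmp C r a = idm C A"
    using mono[OF add_in_hom[OF comp_in_hom[OF a r(1)] neg_in_hom[OF id_in_hom[OF A]]]]
      eq_if_add_neg_eq_zero[OF comp_in_hom[OF a r(1)] id_in_hom[OF A]] by simp
  moreover have "cmp C r s = zer C B A"
    using mono[OF comp_in_hom[OF s r(1)]] comp_assoc[OF s r(1) a] r(2) e(3) by simp
  moreover have "madd C (cmp C a r) (cmp C s b) = idm C M"
    using r(2) add_neg_add_cancel[OF id_in_hom[OF M] comp_in_hom[OF b s]] e_def by simp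
  ultimately show thesis
    using that r(1) A_M_B_def by blast
qed

lemma tri_zero_connecting_split:
  assumes t: "(a, b, zer C (cod C b) (shO C (dom C a))) \<in> tri C"
  obtains p where "p \<in> hom C (cod C a) (dsum C (dom C a) (cod C b))" "is_iso C p"
proof -
  note H = tri_hom[OF t]
  obtain s where s: "s \<in> hom C (cod C b) (cod C a)" "cmp C b s = idm C (cod C b)"
    using tri_zero_connecting_section[OF t] by blast
  obtain r where r: "r \<in> hom C (cod C a) (dom C a)" "cmp C r a = idm C (dom C a)"
    "cmp C r s = zer C (cod C b) (dom C a)" "madd C (cmp C a r) (cmp C s b) = idm C (cod C a)"
    using tri_zero_connecting_retraction[OF t s] by blast
  note bp = biproduct[OF hom_dom_ob[OF H(1)] hom_cod_ob[OF H(2)]]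
  show thesis
    using that biproduct_iso[OF H(1,2) r(1) s(1) r(2) s(2) tri_comp_zero[OF t] r(3,4)]
      add_in_hom[OF comp_in_hom[OF r(1) bp(2)] comp_in_hom[OF H(2) bp(3)]]
    by simp
qed

end

section \<open>The ring R(d) and division by q + 1\<close>

definition infinite_or_odd :: "enat \<Rightarrow> bool" where
  "infinite_or_odd d \<longleftrightarrow> d = \<infinity> \<or> (\<exists>m. d = enat m \<and> m > 0 \<and> odd m)"

definition nonneg_q1_multiple :: "enat \<Rightarrow> rd \<Rightarrow> bool" where
  "nonneg_q1_multiple d x \<longleftrightarrow> (\<exists>\<phi>. rd_nonneg d \<phi> \<and> x = rd_q1 \<phi>)"

lemma rd_q1_apply: "rd_q1 a n = a (n - 1) + a n"
  by (simp add: rd_q1_def rd_add_def rd_q_def)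

lemma in_Rd_pointwise:
  assumes a: "in_Rd d a" and b: "in_Rd d b" and F: "F 0 0 = 0"
  shows "in_Rd d (\<lambda>n. F (a n) (b n))"
proof (cases d)
  case infinity
  have "{n. F (a n) (b n) \<noteq> 0} \<subseteq> {n. a n \<noteq> 0} \<union> {n. b n \<noteq> 0}"
    using F by auto
  moreover have "finite ({n. a n \<noteq> 0} \<union> {n. b n \<noteq> 0})"
    using a b infinity unfolding in_Rd_def by simp
  ultimately show ?thesis
    using infinity unfolding in_Rd_def by (simp add: finite_subset)
next
  case (enat m)
  then show ?thesis
    using a b unfolding in_Rd_def by simp
qed

lemma in_Rd_add: "in_Rd d a \<Longrightarrow> in_Rd d b \<Longrightarrow> in_Rd d (\<lambda>n. a n + b n)"
  and in_Rd_diff: "in_Rd d a \<Longrightarrow> in_Rd d b \<Longrightarrow> in_Rd d (\<lambda>n. a n - b n)"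
  by (rule in_Rd_pointwise; simp)+

lemma in_Rd_zero: "in_Rd d (\<lambda>n. 0)"
  by (cases d) (auto simp: in_Rd_def)

lemma in_Rd_shift:
  assumes a: "in_Rd d a"
  shows "in_Rd d (\<lambda>n. a (n - 1))"
proof (cases d)
  case (enat m)
  then have "a (n - 1 + int m) = a (n - 1)" for n
    using a unfolding in_Rd_def by simp
  then show ?thesis
    using enat unfolding in_Rd_def by (simp add: algebra_simps)
next
  case infinity
  have "{n. a (n - 1) \<noteq> 0} = (\<lambda>k. k + 1) ` {k. a k \<noteq> 0}"
    by (auto simp: image_iff) (metis diff_add_cancel)
  then show ?thesis
    using a infinity unfolding in_Rd_def by simp
qed

lemma rd_geI: "in_Rd d a \<Longrightarrow> in_Rd d b \<Longrightarrow> (\<And>n. b n \<le> a n) \<Longrightarrow> rd_ge d a b"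
  unfolding rd_ge_def rd_nonneg_def rd_sub_def using in_Rd_diff by simp

lemma q1_kernel_alternating:
  assumes "\<forall>n. x (n - 1) + x n = (0::real)"
  shows "x (n + int k) = (-1) ^ k * x n"
proof (induction k)
  case (Suc k)
  have "x (n + int k) + x (n + int (Suc k)) = 0"
    using assms[rule_format, of "n + int (Suc k)"] by simp
  then show ?case
    using Suc by simp
qed simp

text \<open>Multiplication by \<open>q + 1\<close> is injective on R(d) exactly because \<open>-1\<close> is not a root of
  \<open>q\<^sup>d - 1\<close> for odd \<open>d\<close>; for \<open>d = \<infinity>\<close> a nonzero kernel element would have infinite support.\<close>

lemma q1_kernel_trivial:
  assumes d: "infinite_or_odd d" and x: "in_Rd d x" and ker: "\<forall>n. x (n - 1) + x n = 0"
  shows "x n = 0"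
proof (cases d)
  case infinity
  show ?thesis
  proof (rule ccontr)
    assume "x n \<noteq> 0"
    then have "range (\<lambda>k::nat. n + int k) \<subseteq> {n. x n \<noteq> 0}"
      using q1_kernel_alternating[OF ker] by auto
    moreover have "finite {n. x n \<noteq> 0}"
      using x infinity unfolding in_Rd_def by simp
    moreover have "inj (\<lambda>k::nat. n + int k)"
      by (auto simp: inj_def)
    ultimately show False
      using finite_subset finite_imageD by (metis infinite_UNIV_nat)
  qed
next
  case (enat m)
  then have "m > 0" "odd m"
    using d unfolding infinite_or_odd_def by auto
  moreover have "x (n + int m) = x n"
    using x enat unfolding in_Rd_def by simp
  ultimately show ?thesis
    using q1_kernel_alternating[OF ker, of n m] by simp
qed

lemma q1_cancel:
  assumes d: "infinite_or_odd d" and x: "in_Rd d x" and y: "in_Rd d y"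
    and eq: "\<And>n. x (n - 1) + x n = y (n - 1) + y n"
  shows "x = y"
proof
  fix n
  have "\<forall>n. (x (n - 1) - y (n - 1)) + (x n - y n) = 0"
    using eq by (simp add: algebra_simps)
  then show "x n = y n"
    using q1_kernel_trivial[OF d in_Rd_diff[OF x y], of n] by simp
qed

lemma rd_q1_inj:
  assumes "infinite_or_odd d" "in_Rd d x" "in_Rd d y" "rd_q1 x = rd_q1 y"
  shows "x = y"
  using q1_cancel[OF assms(1-3)] assms(4) by (metis rd_q1_apply)

lemma nonneg_q1_multiple_quotient_nonneg:
  assumes d: "infinite_or_odd d" and x: "nonneg_q1_multiple d x" and y: "in_Rd d y"
    and eq: "\<And>n. x n = y (n - 1) + y n"
  shows "y n \<ge> 0"
proof -
  obtain \<phi> where \<phi>: "rd_nonneg d \<phi>" "x = rd_q1 \<phi>"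
    using x unfolding nonneg_q1_multiple_def by blast
  have "y = \<phi>"
    using q1_cancel[OF d y] \<phi> eq unfolding rd_nonneg_def by (simp add: rd_q1_apply)
  then show ?thesis
    using \<phi>(1) unfolding rd_nonneg_def by simp
qed

lemma nonneg_q1_multiple_antisym:
  assumes d: "infinite_or_odd d"
    and x: "nonneg_q1_multiple d x" and minus_x: "nonneg_q1_multiple d (\<lambda>n. - x n)"
  shows "x n = 0"
proof -
  obtain \<phi> \<psi> where \<phi>: "rd_nonneg d \<phi>" "x = rd_q1 \<phi>" and \<psi>: "rd_nonneg d \<psi>" "(\<lambda>n. - x n) = rd_q1 \<psi>"
    using x minus_x unfolding nonneg_q1_multiple_def by blast
  have "\<forall>n. (\<phi> (n - 1) + \<psi> (n - 1)) + (\<phi> n + \<psi> n) = 0"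
  proof
    fix n
    have "x n = \<phi> (n - 1) + \<phi> n" "- x n = \<psi> (n - 1) + \<psi> n"
      using \<phi>(2) \<psi>(2) by (metis rd_q1_apply)+
    then show "(\<phi> (n - 1) + \<psi> (n - 1)) + (\<phi> n + \<psi> n) = 0"
      by linarith
  qed
  then have "\<phi> k + \<psi> k = 0" for k
    using q1_kernel_trivial[OF d in_Rd_add] \<phi>(1) \<psi>(1) unfolding rd_nonneg_def by blast
  moreover have "\<phi> k \<ge> 0" "\<psi> k \<ge> 0" for k
    using \<phi>(1) \<psi>(1) unfolding rd_nonneg_def by auto
  ultimately have "\<phi> k = 0" for k
    by (meson add_nonneg_eq_0_iff)
  then show ?thesis
    using \<phi>(2) by (simp add: rd_q1_apply)
qed

section \<open>Ranks of objects\<close>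

locale object_rank = triangulated_category C for C :: "('o, 'm, 'e) tricat_scheme" +
  fixes d :: enat and \<rho> :: "'o \<Rightarrow> rd"
  assumes period: "infinite_or_odd d"
    and rho_in_Rd: "X \<in> Ob C \<Longrightarrow> in_Rd d (\<rho> X)"
    and rho_shift: "X \<in> Ob C \<Longrightarrow> \<rho> (shO C X) n = \<rho> X (n - 1)"
    and rho_dsum: "X \<in> Ob C \<Longrightarrow> Y \<in> Ob C \<Longrightarrow> \<rho> (dsum C X Y) n = \<rho> X n + \<rho> Y n"
    and rho_tri: "(f, g, h) \<in> tri C \<Longrightarrow>
      nonneg_q1_multiple d (\<lambda>n. \<rho> (dom C f) n - \<rho> (cod C f) n + \<rho> (cod C g) n)"
begin

text \<open>\<open>\<rho>(Z)\<close> and \<open>-\<rho>(Z)\<close> are both nonnegative multiples of \<open>q + 1\<close>, by the triangles on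
  \<open>1\<^sub>Z\<close> and on the isomorphism \<open>Z \<rightarrow> Z \<oplus> Z \<oplus> Z\<close>.\<close>

lemma rho_zero_obj:
  assumes Z: "is_zero_obj C Z"
  shows "\<rho> Z n = 0"
proof -
  have Z_ob: "Z \<in> Ob C"
    using zero_obj_ob[OF Z] .
  define Z3 where "Z3 = dsum C Z (dsum C Z Z)"
  have Z3: "is_zero_obj C Z3"
    unfolding Z3_def using dsum_zero_obj[OF Z dsum_zero_obj[OF Z Z]] .
  have Z3_ob: "Z3 \<in> Ob C"
    using zero_obj_ob[OF Z3] .
  have "nonneg_q1_multiple d (\<lambda>n. \<rho> Z n - \<rho> Z3 n + \<rho> Z n)"
    using rho_tri[OF tri_of_iso[OF zero_in_hom[OF Z_ob Z3_ob] zero_obj_zero_is_iso[OF Z Z3] Z]]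
      hom_dom[OF zero_in_hom[OF Z_ob Z3_ob]] hom_cod[OF zero_in_hom[OF Z_ob Z3_ob]]
      hom_cod[OF zero_in_hom[OF Z3_ob Z_ob]] by simp
  moreover have "\<rho> Z3 n = \<rho> Z n + (\<rho> Z n + \<rho> Z n)" for n
    unfolding Z3_def using rho_dsum Z_ob biproduct(1)[OF Z_ob Z_ob] by simp
  ultimately have "nonneg_q1_multiple d (\<lambda>n. - \<rho> Z n)"
    by simp
  moreover have "nonneg_q1_multiple d (\<lambda>n. \<rho> Z n - \<rho> Z n + \<rho> Z n)"
    using rho_tri[OF tri_id[OF Z_ob Z]] hom_dom[OF id_in_hom[OF Z_ob]]
      hom_cod[OF id_in_hom[OF Z_ob]]
      hom_cod[OF zero_in_hom[OF Z_ob Z_ob]] by simp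
  ultimately show ?thesis
    using nonneg_q1_multiple_antisym[OF period, of "\<rho> Z"] by simp
qed

lemma rho_tri_zero_obj:
  assumes "(f, g, h) \<in> tri C" and "is_zero_obj C (cod C g)"
  shows "nonneg_q1_multiple d (\<lambda>n. \<rho> (dom C f) n - \<rho> (cod C f) n)"
  using rho_tri[OF assms(1)] rho_zero_obj[OF assms(2)] by simp

lemma rho_iso:
  assumes e: "e \<in> hom C M N" and iso: "is_iso C e"
  shows "\<rho> M = \<rho> N"
proof
  fix n
  obtain Z where Z: "is_zero_obj C Z"
    using zero_obj_exists by blast
  obtain e' where e': "e' \<in> hom C N M" "is_iso C e'"
    using is_iso_inverse[OF iso e] by blast
  have "nonneg_q1_multiple d (\<lambda>n. \<rho> M n - \<rho> N n)"
    using rho_tri_zero_obj[OF tri_of_iso[OF e iso Z]] hom_dom[OF e] hom_cod[OF e]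
      hom_cod[OF zero_in_hom[OF hom_cod_ob[OF e] zero_obj_ob[OF Z]]] Z by simp
  moreover have "nonneg_q1_multiple d (\<lambda>n. - (\<rho> M n - \<rho> N n))"
    using rho_tri_zero_obj[OF tri_of_iso[OF e'(1,2) Z]] hom_dom[OF e'(1)] hom_cod[OF e'(1)]
      hom_cod[OF zero_in_hom[OF hom_cod_ob[OF e'(1)] zero_obj_ob[OF Z]]] Z by simp
  ultimately show "\<rho> M n = \<rho> N n"
    using nonneg_q1_multiple_antisym[OF period] by (metis eq_iff_diff_eq_0)
qed

text \<open>The octahedral axiom yields an exact triangle \<open>cone(f) \<rightarrow> cone(g \<circ> f) \<rightarrow> cone(g) \<rightarrow> \<Sigma>cone(f)\<close>.\<close>

lemma rho_octahedral:
  assumes f: "f \<in> hom C X Y" and g: "g \<in> hom C Y Z"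
    and t1: "(f, u, w) \<in> tri C" and t2: "(g, v, j) \<in> tri C" and t3: "(cmp C g f, v', w') \<in> tri C"
  shows "nonneg_q1_multiple d (\<lambda>n. \<rho> (cod C u) n - \<rho> (cod C v') n + \<rho> (cod C v) n)"
proof -
  obtain a b where ab: "(a, b, cmp C (shM C u) j) \<in> tri C" "cmp C w' a = w"
    "cmp C j b = cmp C (shM C f) w'"
    using octahedral[OF f g t1 t2 t3] by metis
  note H1 = tri_hom[OF t1] and H2 = tri_hom[OF t2] and H3 = tri_hom[OF t3] and H = tri_hom[OF ab(1)]
  have gf: "cmp C g f \<in> hom C X Z"
    using comp_in_hom[OF f g] .
  have u: "u \<in> hom C Y (cod C u)" and w: "w \<in> hom C (cod C u) (shO C X)"
    using H1 hom_dom[OF f] hom_cod[OF f] by auto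
  have j: "j \<in> hom C (cod C v) (shO C Y)"
    using H2 hom_dom[OF g] by simp
  have w': "w' \<in> hom C (cod C v') (shO C X)"
    using H3 hom_dom[OF gf] by simp
  have "cod C b = cod C v"
    using H(3) hom_dom[OF comp_in_hom[OF j shift_in_hom[OF u]]] by (simp add: hom_def)
  moreover have "cod C a = cod C v'"
    using ab(3) hom_dom[OF comp_in_hom[OF H(2) j[folded \<open>cod C b = cod C v\<close>]]]
      hom_dom[OF comp_in_hom[OF w' shift_in_hom[OF f]]] by simp
  moreover have "dom C a = cod C u"
    using ab(2) hom_dom[OF comp_in_hom[OF H(1)[unfolded \<open>cod C a = cod C v'\<close>] w']] hom_dom[OF w]
      by simp
  ultimately show ?thesis
    using rho_tri[OF ab(1)] by simp
qed

lemma rho_cone_unique: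
  assumes t1: "(f, g, h) \<in> tri C" and t2: "(f, g', h') \<in> tri C"
  shows "\<rho> (cod C g) = \<rho> (cod C g')"
proof
  fix n
  obtain Z where Z: "is_zero_obj C Z"
    using zero_obj_exists by blast
  define X Y where "X = dom C f" "Y = cod C f"
  have f: "f \<in> hom C X Y"
    using tri_hom(1)[OF t1] X_Y_def by simp
  have Y: "Y \<in> Ob C"
    using hom_cod_ob[OF f] .
  have ti: "(idm C Y, zer C Y Z, zer C Z (shO C Y)) \<in> tri C"
    using tri_id[OF Y Z] .
  have fY: "cmp C (idm C Y) f = f"
    using comp_id_left[OF f] .
  have Z_cod: "cod C (zer C Y Z) = Z"
    using hom_cod[OF zero_in_hom[OF Y zero_obj_ob[OF Z]]] .
  have "nonneg_q1_multiple d (\<lambda>n. \<rho> (cod C g) n - \<rho> (cod C g') n + \<rho> Z n)"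
    using rho_octahedral[OF f id_in_hom[OF Y] t1 ti] t2 fY Z_cod by simp
  moreover have "nonneg_q1_multiple d (\<lambda>n. \<rho> (cod C g') n - \<rho> (cod C g) n + \<rho> Z n)"
    using rho_octahedral[OF f id_in_hom[OF Y] t2 ti] t1 fY Z_cod by simp
  ultimately show "\<rho> (cod C g) n = \<rho> (cod C g') n"
    using nonneg_q1_multiple_antisym[OF period, of "\<lambda>n. \<rho> (cod C g) n - \<rho> (cod C g') n"]
      rho_zero_obj[OF Z] by simp
qed

lemma rho_tri_zero_connecting:
  assumes t: "(a, b, zer C (cod C b) (shO C (dom C a))) \<in> tri C"
  shows "\<rho> (cod C a) n = \<rho> (dom C a) n + \<rho> (cod C b) n"
proof -
  obtain p where p: "p \<in> hom C (cod C a) (dsum C (dom C a) (cod C b))" "is_iso C p"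
    using tri_zero_connecting_split[OF t] by blast
  note H = tri_hom[OF t]
  show ?thesis
    using rho_iso[OF p] rho_dsum[OF hom_dom_ob[OF H(1)] hom_cod_ob[OF H(2)]] by simp
qed

section \<open>The rank of a morphism\<close>

abbreviation rk :: "'m \<Rightarrow> rd" where
  "rk \<equiv> rk_of C d \<rho>"

lemma cone_tri:
  assumes "f \<in> Mor C"
  obtains g h where "(f, g, h) \<in> tri C" "cone C f = cod C g"
proof -
  obtain g h where "(f, g, h) \<in> tri C"
    using tri_exists[OF assms] .
  then have "\<exists>gh. (f, fst gh, snd gh) \<in> tri C"
    by (intro exI[of _ "(g, h)"]) simp
  then have "(f, fst (SOME gh. (f, fst gh, snd gh) \<in> tri C),
      snd (SOME gh. (f, fst gh, snd gh) \<in> tri C)) \<in> tri C"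
    by (rule someI_ex)
  then show thesis
    using that unfolding cone_def by blast
qed

lemma rk_num_nonneg_q1_multiple:
  assumes f: "f \<in> Mor C"
  shows "nonneg_q1_multiple d (rk_num C \<rho> f)"
proof -
  obtain g h where t: "(f, g, h) \<in> tri C" and cone: "cone C f = cod C g"
    using cone_tri[OF f] by blast
  note H = tri_hom[OF t]
  have "nonneg_q1_multiple d (\<lambda>n. \<rho> (dom C g) n - \<rho> (cod C g) n + \<rho> (cod C h) n)"
    using rho_tri[OF tri_rotate[OF t]] .
  moreover have "dom C g = cod C f" "cod C h = shO C (dom C f)"
    using hom_dom[OF H(2)] hom_cod[OF H(3)] by auto
  ultimately show ?thesis
    using cone rho_shift[OF hom_dom_ob[OF H(1)]]
    unfolding rk_num_def rd_add_def rd_sub_def rd_q_def by simp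
qed

lemma rk_num_unique_quotient:
  assumes "f \<in> Mor C"
  shows "\<exists>!r. in_Rd d r \<and> rd_q1 r = rk_num C \<rho> f"
  using rk_num_nonneg_q1_multiple[OF assms] rd_q1_inj[OF period]
  unfolding nonneg_q1_multiple_def rd_nonneg_def by metis

lemma rk_of_nonneg: "f \<in> Mor C \<Longrightarrow> rd_nonneg d (rk f)"
  and rd_q1_rk_of: "f \<in> Mor C \<Longrightarrow> rd_q1 (rk f) = rk_num C \<rho> f"
proof -
  have "rd_nonneg d (rk f) \<and> rd_q1 (rk f) = rk_num C \<rho> f" if f: "f \<in> Mor C"
  proof -
    obtain \<phi> where \<phi>: "rd_nonneg d \<phi>" "rk_num C \<rho> f = rd_q1 \<phi>"
      using rk_num_nonneg_q1_multiple[OF f] unfolding nonneg_q1_multiple_def by blast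
    have "rk f = \<phi>"
      unfolding rk_of_def
      using the1_equality[OF rk_num_unique_quotient[OF f]] \<phi> unfolding rd_nonneg_def by simp
    then show ?thesis
      using \<phi> by simp
  qed
  then show "f \<in> Mor C \<Longrightarrow> rd_nonneg d (rk f)" "f \<in> Mor C \<Longrightarrow> rd_q1 (rk f) = rk_num C \<rho> f"
    by blast+
qed

lemma rk_of_in_Rd: "f \<in> Mor C \<Longrightarrow> in_Rd d (rk f)"
  using rk_of_nonneg unfolding rd_nonneg_def by blast

text \<open>Since \<open>\<rho>\<close> of a cone does not depend on the triangle (\<open>rho_cone_unique\<close>), any exact
  triangle on \<open>f\<close> computes its rank.\<close>

lemma rk_of_tri:
  assumes t: "(f, g, h) \<in> tri C"
  shows "rk f (n - 1) + rk f n = \<rho> (cod C f) n - \<rho> (cod C g) n + \<rho> (dom C f) (n - 1)"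
proof -
  have f: "f \<in> Mor C"
    using hom_mor[OF tri_hom(1)[OF t]] .
  obtain g' h' where t': "(f, g', h') \<in> tri C" and cone: "cone C f = cod C g'"
    using cone_tri[OF f] by blast
  have "rd_q1 (rk f) n = rk_num C \<rho> f n"
    using rd_q1_rk_of[OF f] by simp
  then show ?thesis
    using cone rho_cone_unique[OF t' t]
    unfolding rd_q1_apply rk_num_def rd_add_def rd_sub_def rd_q_def by simp
qed

lemma rk_of_eqI:
  "f \<in> Mor C \<Longrightarrow> in_Rd d r \<Longrightarrow> (\<And>n. rk f (n - 1) + rk f n = r (n - 1) + r n) \<Longrightarrow> rk f = r"
  using q1_cancel[OF period rk_of_in_Rd] by blast

lemma rk_of_tri_add:
  assumes t: "(f, g, h) \<in> tri C"
  shows "rk f n + rk g n = \<rho> (cod C f) n"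
proof -
  note H = tri_hom[OF t]
  have "(\<lambda>n. rk f n + rk g n) = \<rho> (cod C f)"
  proof (rule q1_cancel[OF period in_Rd_add[OF rk_of_in_Rd rk_of_in_Rd] rho_in_Rd])
    fix n
    show "(rk f (n - 1) + rk g (n - 1)) + (rk f n + rk g n) = \<rho> (cod C f) (n - 1) + \<rho> (cod C f) n"
      using rk_of_tri[OF t, of n] rk_of_tri[OF tri_rotate[OF t], of n] hom_dom[OF H(2)]
        hom_cod[OF H(3)]
        rho_shift[OF hom_dom_ob[OF H(1)]] by simp
  qed (use H hom_mor hom_cod_ob in blast)+
  then show ?thesis
    by metis
qed

lemma rk_of_id:
  assumes Y: "Y \<in> Ob C"
  shows "rk (idm C Y) = \<rho> Y"
proof -
  obtain Z where Z: "is_zero_obj C Z"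
    using zero_obj_exists by blast
  show ?thesis
  proof (rule rk_of_eqI[OF hom_mor[OF id_in_hom[OF Y]] rho_in_Rd[OF Y]])
    fix n
    show "rk (idm C Y) (n - 1) + rk (idm C Y) n = \<rho> Y (n - 1) + \<rho> Y n"
      using rk_of_tri[OF tri_id[OF Y Z], of n] hom_dom[OF id_in_hom[OF Y]]
        hom_cod[OF id_in_hom[OF Y]]
        hom_cod[OF zero_in_hom[OF Y zero_obj_ob[OF Z]]] rho_zero_obj[OF Z] by simp
  qed
qed

text \<open>Sylvester's rank inequality, from the octahedral triangle on the three cones.\<close>

lemma rk_of_comp_ge:
  assumes f: "f \<in> hom C X Y" and g: "g \<in> hom C Y Z"
  shows "rk (cmp C g f) n \<ge> rk f n + rk g n - \<rho> Y n"
proof -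
  have gf: "cmp C g f \<in> hom C X Z"
    using comp_in_hom[OF f g] .
  obtain u w where t1: "(f, u, w) \<in> tri C"
    using tri_exists[OF hom_mor[OF f]] .
  obtain v j where t2: "(g, v, j) \<in> tri C"
    using tri_exists[OF hom_mor[OF g]] .
  obtain v' w' where t3: "(cmp C g f, v', w') \<in> tri C"
    using tri_exists[OF hom_mor[OF gf]] .
  define s where "s = (\<lambda>n. \<rho> Y n - rk f n - rk g n + rk (cmp C g f) n)"
  have s: "in_Rd d s"
    unfolding s_def
    using in_Rd_add[OF in_Rd_diff[OF in_Rd_diff[OF rho_in_Rd[OF hom_cod_ob[OF f]]
      rk_of_in_Rd[OF hom_mor[OF f]]] rk_of_in_Rd[OF hom_mor[OF g]]] rk_of_in_Rd[OF hom_mor[OF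
      gf]]] .
  have "\<rho> (cod C u) n - \<rho> (cod C v') n + \<rho> (cod C v) n = s (n - 1) + s n" for n
    using rk_of_tri[OF t1, of n] rk_of_tri[OF t2, of n] rk_of_tri[OF t3, of n]
      hom_dom[OF f] hom_cod[OF f] hom_dom[OF g] hom_cod[OF g] hom_dom[OF gf] hom_cod[OF gf]
    unfolding s_def by simp
  then have "s n \<ge> 0"
    using nonneg_q1_multiple_quotient_nonneg[OF period rho_octahedral[OF f g t1 t2 t3] s] by blast
  then show ?thesis
    unfolding s_def by simp
qed

lemma rk_of_zero:
  assumes X: "X \<in> Ob C" and Y: "Y \<in> Ob C"
  shows "rk (zer C X Y) n = 0"
proof -
  have z: "zer C X Y \<in> hom C X Y"
    using zero_in_hom[OF X Y] .
  obtain u w where t: "(zer C X Y, u, w) \<in> tri C"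
    using tri_exists[OF hom_mor[OF z]] .
  note H = tri_hom[OF t]
  have du: "dom C u = Y" and cw: "cod C w = shO C X"
    using hom_dom[OF H(2)] hom_cod[OF H(3)] hom_dom[OF z] hom_cod[OF z] by auto
  have "mneg C (shM C (zer C X Y)) = zer C (cod C w) (shO C (dom C u))"
    using shift_zero[OF X Y] neg_zero[OF shift_ob[OF X] shift_ob[OF Y]] du cw by simp
  then have split_tri: "(u, w, zer C (cod C w) (shO C (dom C u))) \<in> tri C"
    using tri_rotate[OF t] by simp
  have split: "\<rho> (cod C u) n = \<rho> Y n + \<rho> X (n - 1)" for n
    using rho_tri_zero_connecting[OF split_tri, of n] du cw rho_shift[OF X] by simp
  have "rk (zer C X Y) = (\<lambda>n. 0)"
  proof (rule rk_of_eqI[OF hom_mor[OF z] in_Rd_zero])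
    fix n
    show "rk (zer C X Y) (n - 1) + rk (zer C X Y) n = 0 + 0"
      using rk_of_tri[OF t, of n] split hom_dom[OF z] hom_cod[OF z] by simp
  qed
  then show ?thesis
    by simp
qed

lemma rk_of_comp_le_left:
  assumes f: "f \<in> hom C X Y" and g: "g \<in> hom C Y Z"
  shows "rk (cmp C g f) n \<le> rk g n"
proof -
  obtain v j where t: "(g, v, j) \<in> tri C"
    using tri_exists[OF hom_mor[OF g]] .
  have v: "v \<in> hom C Z (cod C v)"
    using tri_hom(2)[OF t] hom_cod[OF g] by simp
  have "cmp C v (cmp C g f) = zer C X (cod C v)"
    using comp_assoc[OF f g v] tri_comp_zero[OF t] hom_dom[OF g]
      comp_zero_left[OF f hom_cod_ob[OF v]]
    by simp
  then show ?thesis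
    using rk_of_comp_ge[OF comp_in_hom[OF f g] v, of n]
      rk_of_zero[OF hom_dom_ob[OF f] hom_cod_ob[OF v]]
      rk_of_tri_add[OF t, of n] hom_cod[OF g] by simp
qed

lemma rk_of_comp_iso:
  assumes k: "k \<in> hom C X Y" and e: "e \<in> hom C Y Y'" and iso: "is_iso C e"
  shows "rk (cmp C e k) = rk k"
proof -
  obtain Z where Z: "is_zero_obj C Z"
    using zero_obj_exists by blast
  have Z_ob: "Z \<in> Ob C"
    using zero_obj_ob[OF Z] .
  obtain e' where e': "e' \<in> hom C Y' Y" "is_iso C e'" "cmp C e' e = idm C Y"
    using is_iso_inverse[OF iso e] by blast
  have ek: "cmp C e k \<in> hom C X Y'"
    using comp_in_hom[OF k e] .
  obtain u w where t1: "(k, u, w) \<in> tri C"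
    using tri_exists[OF hom_mor[OF k]] .
  obtain u' w' where t2: "(cmp C e k, u', w') \<in> tri C"
    using tri_exists[OF hom_mor[OF ek]] .
  have "cmp C e' (cmp C e k) = k"
    using comp_assoc[OF k e e'(1)] e'(3) comp_id_left[OF k] by simp
  then have "nonneg_q1_multiple d (\<lambda>n. \<rho> (cod C u') n - \<rho> (cod C u) n + \<rho> (cod C (zer C Y Z)) n)"
    using rho_octahedral[OF ek e'(1) t2 tri_of_iso[OF e'(1,2) Z]] t1 by simp
  moreover have
    "nonneg_q1_multiple d (\<lambda>n. \<rho> (cod C u) n - \<rho> (cod C u') n + \<rho> (cod C (zer C Y' Z)) n)"
    using rho_octahedral[OF k e t1 tri_of_iso[OF e iso Z] t2] .
  ultimately have "\<rho> (cod C u) n = \<rho> (cod C u') n" for n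
    using nonneg_q1_multiple_antisym[OF period, of "\<lambda>n. \<rho> (cod C u) n - \<rho> (cod C u') n"]
      hom_cod[OF zero_in_hom[OF hom_dom_ob[OF e] Z_ob]]
      hom_cod[OF zero_in_hom[OF hom_cod_ob[OF e] Z_ob]]
      rho_zero_obj[OF Z] by simp
  then show ?thesis
  proof (intro rk_of_eqI[OF hom_mor[OF ek] rk_of_in_Rd[OF hom_mor[OF k]]])
    fix n
    assume "\<And>n. \<rho> (cod C u) n = \<rho> (cod C u') n"
    then show "rk (cmp C e k) (n - 1) + rk (cmp C e k) n = rk k (n - 1) + rk k n"
      using rk_of_tri[OF t1, of n] rk_of_tri[OF t2, of n] rho_iso[OF e iso]
        hom_dom[OF k] hom_cod[OF k] hom_dom[OF ek] hom_cod[OF ek] by simp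
  qed
qed

lemma rk_of_neg_shift:
  assumes f: "f \<in> Mor C"
  shows "rk (mneg C (shM C f)) n = rk f (n - 1)"
proof -
  obtain g h where t: "(f, g, h) \<in> tri C"
    using tri_exists[OF f] .
  note H = tri_hom[OF t]
  define X Y Z where "X = dom C f" "Y = cod C f" "Z = cod C g"
  have X: "X \<in> Ob C" and Y: "Y \<in> Ob C" and Z: "Z \<in> Ob C"
    using hom_dom_ob[OF H(1)] hom_cod_ob[OF H(1)] hom_cod_ob[OF H(2)] X_Y_Z_def by auto
  have nf: "mneg C (shM C f) \<in> hom C (shO C X) (shO C Y)"
    using neg_in_hom[OF shift_in_hom[OF H(1)]] X_Y_Z_def by simp
  have ng: "mneg C (shM C g) \<in> hom C (shO C Y) (shO C Z)"
    using neg_in_hom[OF shift_in_hom[OF H(2)]] X_Y_Z_def by simp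
  have "rk (mneg C (shM C f)) = (\<lambda>n. rk f (n - 1))"
  proof (rule rk_of_eqI[OF hom_mor[OF nf] in_Rd_shift[OF rk_of_in_Rd[OF f]]])
    fix n
    show "rk (mneg C (shM C f)) (n - 1) + rk (mneg C (shM C f)) n = rk f (n - 1 - 1) + rk f (n - 1)"
      using rk_of_tri[OF tri_rotate[OF tri_rotate[OF tri_rotate[OF t]]], of n]
        rk_of_tri[OF t, of "n - 1"]
        hom_dom[OF nf] hom_cod[OF nf] hom_cod[OF ng] rho_shift X Y Z X_Y_Z_def by simp
  qed
  then show ?thesis
    by simp
qed

lemma rk_of_shift:
  assumes f: "f \<in> Mor C"
  shows "rk (shM C f) n = rk f (n - 1)"
proof -
  define X Y where "X = dom C f" "Y = cod C f"
  have sf: "shM C f \<in> hom C (shO C X) (shO C Y)"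
    using shift_in_hom[OF mor_in_hom[OF f]] X_Y_def by simp
  have SY: "shO C Y \<in> Ob C"
    using hom_cod_ob[OF sf] .
  have minus_id: "mneg C (idm C (shO C Y)) \<in> hom C (shO C Y) (shO C Y)"
    using neg_in_hom[OF id_in_hom[OF SY]] .
  have "cmp C (mneg C (idm C (shO C Y))) (mneg C (idm C (shO C Y))) = idm C (shO C Y)"
    using comp_neg_left[OF minus_id id_in_hom[OF SY]] comp_id_left[OF minus_id]
      neg_neg[OF id_in_hom[OF SY]]
    by simp
  then have "is_iso C (mneg C (idm C (shO C Y)))"
    using is_isoI[OF minus_id minus_id] by blast
  moreover have "cmp C (mneg C (idm C (shO C Y))) (shM C f) = mneg C (shM C f)"
    using comp_neg_left[OF sf id_in_hom[OF SY]] comp_id_left[OF sf] by simp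
  ultimately have "rk (mneg C (shM C f)) = rk (shM C f)"
    using rk_of_comp_iso[OF sf minus_id] by simp
  then show ?thesis
    using rk_of_neg_shift[OF f] by metis
qed

text \<open>Dual to \<open>rk_of_comp_le_left\<close>: rotate the triangle on \<open>f\<close> twice and use shift invariance.\<close>

lemma rk_of_comp_le_right:
  assumes f: "f \<in> hom C X Y" and g: "g \<in> hom C Y Z"
  shows "rk (cmp C g f) n \<le> rk f n"
proof -
  obtain u w where t: "(f, u, w) \<in> tri C"
    using tri_exists[OF hom_mor[OF f]] .
  have t2: "(w, mneg C (shM C f), mneg C (shM C u)) \<in> tri C"
    using tri_rotate[OF tri_rotate[OF t]] .
  have w: "w \<in> hom C (cod C u) (shO C X)"
    using tri_hom(3)[OF t] hom_dom[OF f] by simp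
  have U: "cod C u \<in> Ob C"
    using hom_dom_ob[OF w] .
  have sf: "shM C f \<in> hom C (shO C X) (shO C Y)" and sg: "shM C g \<in> hom C (shO C Y) (shO C Z)"
    using shift_in_hom[OF f] shift_in_hom[OF g] .
  have "mneg C (cmp C (shM C f) w) = zer C (cod C u) (shO C Y)"
    using tri_comp_zero[OF t2] hom_dom[OF w] hom_cod[OF neg_in_hom[OF sf]] comp_neg_left[OF w sf]
      by simp
  then have "cmp C (shM C f) w = zer C (cod C u) (shO C Y)"
    using neg_neg[OF comp_in_hom[OF w sf]] neg_zero[OF U hom_cod_ob[OF sf]] by metis
  then have "cmp C (shM C (cmp C g f)) w = zer C (cod C u) (shO C Z)"
    using shift_comp[OF f g] comp_assoc[OF w sf sg] comp_zero_right[OF sg U] by simp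
  then have "rk (cmp C (shM C (cmp C g f)) w) (n + 1) = 0"
    using rk_of_zero[OF U hom_cod_ob[OF sg]] by simp
  moreover have "rk (cmp C (shM C (cmp C g f)) w) (n + 1)
      \<ge> rk w (n + 1) + rk (shM C (cmp C g f)) (n + 1) - \<rho> (shO C X) (n + 1)"
    using rk_of_comp_ge[OF w shift_in_hom[OF comp_in_hom[OF f g]]] .
  moreover have "rk w (n + 1) + rk (mneg C (shM C f)) (n + 1) = \<rho> (shO C X) (n + 1)"
    using rk_of_tri_add[OF t2] hom_cod[OF w] by simp
  ultimately show ?thesis
    using rk_of_neg_shift[OF hom_mor[OF f], of "n + 1"]
      rk_of_shift[OF hom_mor[OF comp_in_hom[OF f g]], of "n + 1"] by simp
qed

lemma rk_of_mtri_id_ge: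
  assumes f: "f \<in> hom C X Y" and h: "h \<in> hom C Z Y"
  shows "rk (mtri C f h (idm C Z)) n \<ge> rk f n + \<rho> Z n"
proof -
  have X: "X \<in> Ob C" and Y: "Y \<in> Ob C" and Z: "Z \<in> Ob C"
    using hom_dom_ob[OF f] hom_cod_ob[OF f] hom_dom_ob[OF h] by auto
  note N = mtri_in_hom[OF f id_in_hom[OF Z] h] and b2 = biproduct[OF Y Z]
  obtain u w where t: "(mtri C f h (idm C Z), u, w) \<in> tri C"
    using tri_exists[OF hom_mor[OF N]] .
  define V where "V = cod C u"
  have u: "u \<in> hom C (dsum C Y Z) V"
    using tri_hom(2)[OF t] hom_cod[OF N] V_def by simp
  have V: "V \<in> Ob C"
    using hom_cod_ob[OF u] .
  have "cmp C u (mtri C f h (idm C Z)) = zer C (dsum C X Z) V"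
    using tri_comp_zero[OF t] hom_dom[OF N] V_def by simp
  note ann = mtri_id_annihilator[OF f h u this]
  define x where "x = cmp C u (in1 C Y Z)"
  have x: "x \<in> hom C Y V"
    unfolding x_def using comp_in_hom[OF b2(2) u] .
  have E: "copair C Y Z (idm C Y) (mneg C h) \<in> hom C (dsum C Y Z) Y"
    using copair_in_hom[OF id_in_hom[OF Y] neg_in_hom[OF h]] .
  have "rk u n \<le> rk x n"
    using rk_of_comp_le_left[OF E x] ann(2) x_def by simp
  moreover have "rk x n \<le> \<rho> Y n - rk f n"
    using rk_of_comp_ge[OF f x, of n] ann(1) rk_of_zero[OF X V] x_def by simp
  moreover have "rk (mtri C f h (idm C Z)) n + rk u n = \<rho> Y n + \<rho> Z n"
    using rk_of_tri_add[OF t] hom_cod[OF N] rho_dsum[OF Y Z] by simp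
  ultimately show ?thesis
    by linarith
qed

lemma rk_of_mdsum_id_ge:
  assumes Y: "Y \<in> Ob C" and g: "g \<in> hom C Z W"
  shows "rk (mdsum C (idm C Y) g) n \<ge> \<rho> Y n + rk g n"
proof -
  have Z: "Z \<in> Ob C" and W: "W \<in> Ob C"
    using hom_dom_ob[OF g] hom_cod_ob[OF g] by auto
  note D = mdsum_in_hom[OF id_in_hom[OF Y] g] and b2 = biproduct[OF Y W]
  obtain u w where t: "(mdsum C (idm C Y) g, u, w) \<in> tri C"
    using tri_exists[OF hom_mor[OF D]] .
  define V where "V = cod C u"
  have u: "u \<in> hom C (dsum C Y W) V"
    using tri_hom(2)[OF t] hom_cod[OF D] V_def by simp
  have V: "V \<in> Ob C"
    using hom_cod_ob[OF u] .
  have "cmp C u (mdsum C (idm C Y) g) = zer C (dsum C Y Z) V"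
    using tri_comp_zero[OF t] hom_dom[OF D] V_def by simp
  note ann = mdsum_id_annihilator[OF Y g u this]
  define y where "y = cmp C u (in2 C Y W)"
  have y: "y \<in> hom C W V"
    unfolding y_def using comp_in_hom[OF b2(3) u] .
  have "rk u n \<le> rk y n"
    using rk_of_comp_le_left[OF b2(5) y] ann(2) y_def by simp
  moreover have "rk y n \<le> \<rho> W n - rk g n"
    using rk_of_comp_ge[OF g y, of n] ann(1) rk_of_zero[OF Z V] y_def by simp
  moreover have "rk (mdsum C (idm C Y) g) n + rk u n = \<rho> Y n + \<rho> W n"
    using rk_of_tri_add[OF t] hom_cod[OF D] rho_dsum[OF Y W] by simp
  ultimately show ?thesis
    by linarith
qed

lemma rk_of_mtri_ge:
  assumes f: "f \<in> hom C X Y" and g: "g \<in> hom C Z W" and h: "h \<in> hom C Z Y"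
  shows "rk (mtri C f h g) n \<ge> rk f n + rk g n"
proof -
  have Y: "Y \<in> Ob C" and Z: "Z \<in> Ob C"
    using hom_cod_ob[OF f] hom_dom_ob[OF g] by auto
  have "rk (mtri C f h g) n
      \<ge> rk (mtri C f h (idm C Z)) n + rk (mdsum C (idm C Y) g) n - \<rho> (dsum C Y Z) n"
    using rk_of_comp_ge[OF mtri_in_hom[OF f id_in_hom[OF Z] h] mdsum_in_hom[OF id_in_hom[OF Y] g]]
      mdsum_id_comp_mtri_id[OF f g h] by simp
  then show ?thesis
    using rk_of_mtri_id_ge[OF f h, of n] rk_of_mdsum_id_ge[OF Y g, of n] rho_dsum[OF Y Z] by simp
qed

lemma rk_of_mdsum:
  assumes f: "f \<in> hom C X Y" and g: "g \<in> hom C Z W"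
  shows "rk (mdsum C f g) n = rk f n + rk g n"
proof -
  have X: "X \<in> Ob C" and Y: "Y \<in> Ob C" and Z: "Z \<in> Ob C" and W: "W \<in> Ob C"
    using hom_dom_ob hom_cod_ob f g by auto
  obtain u w where t1: "(f, u, w) \<in> tri C"
    using tri_exists[OF hom_mor[OF f]] .
  obtain v j where t2: "(g, v, j) \<in> tri C"
    using tri_exists[OF hom_mor[OF g]] .
  define A B where "A = cod C u" "B = cod C v"
  have u: "u \<in> hom C Y A" and v: "v \<in> hom C W B"
    using tri_hom(2)[OF t1] tri_hom(2)[OF t2] hom_cod[OF f] hom_cod[OF g] A_B_def by auto
  have A: "A \<in> Ob C" and B: "B \<in> Ob C"
    using hom_cod_ob[OF u] hom_cod_ob[OF v] .
  have uf: "cmp C u f = zer C X A" and vg: "cmp C v g = zer C Z B"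
    using tri_comp_zero[OF t1] tri_comp_zero[OF t2] hom_dom[OF f] hom_dom[OF g] A_B_def by auto
  have "rk (mdsum C f g) n \<ge> rk f n + rk g n"
    using rk_of_mtri_ge[OF f g zero_in_hom[OF Z Y]] mtri_zero[OF f g] by simp
  moreover have "0 \<ge> rk (mdsum C f g) n + rk (mdsum C u v) n - \<rho> (dsum C Y W) n"
    using rk_of_comp_ge[OF mdsum_in_hom[OF f g] mdsum_in_hom[OF u v], of n]
      mdsum_comp_eq_zero[OF f g u v uf vg]
      rk_of_zero[OF biproduct(1)[OF X Z] biproduct(1)[OF A B]] by simp
  moreover have "rk (mdsum C u v) n \<ge> rk u n + rk v n"
    using rk_of_mtri_ge[OF u v zero_in_hom[OF W A]] mtri_zero[OF u v] by simp
  moreover have "rk f n + rk u n = \<rho> Y n" "rk g n + rk v n = \<rho> W n"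
    using rk_of_tri_add[OF t1] rk_of_tri_add[OF t2] hom_cod[OF f] hom_cod[OF g] by auto
  ultimately show ?thesis
    using rho_dsum[OF Y W, of n] by linarith
qed

lemma rank_function_rk_of: "rank_function C d rk"
  unfolding rank_function_def
proof (intro conjI ballI impI)
  fix f assume f: "f \<in> Mor C"
  show "rd_nonneg d (rk f)"
    using rk_of_nonneg[OF f] .
  show "rk (shM C f) = rd_q (rk f)"
    unfolding rd_q_def using rk_of_shift[OF f] by auto
next
  fix f g assume f: "f \<in> Mor C" and g: "g \<in> Mor C"
  show "rk (mdsum C f g) = rd_add (rk f) (rk g)"
    unfolding rd_add_def using rk_of_mdsum[OF mor_in_hom[OF f] mor_in_hom[OF g]] by auto
  show "rd_ge d (rk (mtri C f h g)) (rd_add (rk f) (rk g))"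
    if h: "h \<in> hom C (dom C g) (cod C f)" for h
    unfolding rd_add_def
    using rd_geI[OF rk_of_in_Rd[OF hom_mor[OF mtri_in_hom[OF mor_in_hom[OF f] mor_in_hom[OF g] h]]]
        in_Rd_add[OF rk_of_in_Rd[OF f] rk_of_in_Rd[OF g]]]
      rk_of_mtri_ge[OF mor_in_hom[OF f] mor_in_hom[OF g] h] by simp
  assume "cod C f = dom C g"
  then have f': "f \<in> hom C (dom C f) (cod C f)" and g': "g \<in> hom C (cod C f) (cod C g)"
    using mor_in_hom[OF f] mor_in_hom[OF g] by simp_all
  have gf: "cmp C g f \<in> Mor C"
    using hom_mor[OF comp_in_hom[OF f' g']] .
  show "rd_ge d (rk f) (rk (cmp C g f))" "rd_ge d (rk g) (rk (cmp C g f))"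
    using rd_geI[OF rk_of_in_Rd[OF f] rk_of_in_Rd[OF gf]]
      rd_geI[OF rk_of_in_Rd[OF g] rk_of_in_Rd[OF gf]]
      rk_of_comp_le_right[OF f' g'] rk_of_comp_le_left[OF f' g'] by simp_all
next
  fix T assume "T \<in> tri C"
  then obtain f g h where T: "T = (f, g, h)" and t: "(f, g, h) \<in> tri C"
    by (cases T) auto
  have "rd_add (rk f) (rk g) = rk (idm C (cod C f))"
    unfolding rd_add_def rk_of_id[OF hom_cod_ob[OF tri_hom(1)[OF t]]] using rk_of_tri_add[OF t]
      by auto
  then show "case T of (f, g, h) \<Rightarrow> rd_add (rk f) (rk g) = rk (idm C (cod C f))"
    using T by simp
qed

lemma rk_of_int:
  assumes int: "\<And>f g h. (f, g, h) \<in> tri C \<Longrightarrow> \<exists>\<phi>. rd_int d \<phi> \<and>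
      (\<lambda>n. \<rho> (dom C f) n - \<rho> (cod C f) n + \<rho> (cod C g) n) = rd_q1 \<phi>"
    and f: "f \<in> Mor C"
  shows "rd_int d (rk f)"
proof -
  obtain g h where t: "(f, g, h) \<in> tri C" and cone: "cone C f = cod C g"
    using cone_tri[OF f] by blast
  note H = tri_hom[OF t]
  obtain \<phi> where \<phi>: "rd_int d \<phi>" "(\<lambda>n. \<rho> (dom C g) n - \<rho> (cod C g) n + \<rho> (cod C h) n) = rd_q1 \<phi>"
    using int[OF tri_rotate[OF t]] by blast
  have "dom C g = cod C f" "cod C h = shO C (dom C f)"
    using hom_dom[OF H(2)] hom_cod[OF H(3)] by auto
  then have "rd_q1 \<phi> = rk_num C \<rho> f"
    using \<phi>(2) cone rho_shift[OF hom_dom_ob[OF H(1)]]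
    unfolding rk_num_def rd_add_def rd_sub_def rd_q_def by (metis (no_types, lifting))
  then have "rk f = \<phi>"
    using rd_q1_inj[OF period rk_of_in_Rd[OF f]] rd_q1_rk_of[OF f] \<phi>(1) unfolding rd_int_def by simp
  then show ?thesis
    using \<phi>(1) by simp
qed

end

theorem proposition2p12:
  fixes C :: "('o, 'm) tricat" and d :: enat and \<rho> :: "'o \<Rightarrow> rd"
  assumes tri: "triangulated C"
    and d: "d = \<infinity> \<or> (\<exists>m. d = enat m \<and> m > 0 \<and> odd m)"
    and \<rho>R: "\<forall>X \<in> Ob C. in_Rd d (\<rho> X)"
    and a: "\<forall>X \<in> Ob C. \<rho> (shO C X) = rd_q (\<rho> X)"
    and b: "\<forall>X \<in> Ob C. \<forall>Y \<in> Ob C. \<rho> (dsum C X Y) = rd_add (\<rho> X) (\<rho> Y)"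
    and c: "\<forall>(f, g, h) \<in> tri C. \<exists>\<phi>. rd_nonneg d \<phi> \<and>
              rd_add (rd_sub (\<rho> (dom C f)) (\<rho> (cod C f))) (\<rho> (cod C g)) = rd_q1 \<phi>"
  shows "(\<forall>f \<in> Mor C. \<exists>!r. in_Rd d r \<and> rd_q1 r = rk_num C \<rho> f)
       \<and> rank_function C d (rk_of C d \<rho>)
       \<and> ((\<forall>X \<in> Ob C. rd_int d (\<rho> X)) \<and>
          (\<forall>(f, g, h) \<in> tri C. \<exists>\<phi>. rd_nonneg d \<phi> \<and> rd_int d \<phi> \<and>
              rd_add (rd_sub (\<rho> (dom C f)) (\<rho> (cod C f))) (\<rho> (cod C g)) = rd_q1 \<phi>)
          \<longrightarrow> integral_rank_function C d (rk_of C d \<rho>))"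
proof -
  have triangle_sum: "rd_add (rd_sub (\<rho> (dom C f)) (\<rho> (cod C f))) (\<rho> (cod C g))
      = (\<lambda>n. \<rho> (dom C f) n - \<rho> (cod C f) n + \<rho> (cod C g) n)" for f g
    by (simp add: rd_add_def rd_sub_def)
  interpret object_rank C d \<rho>
  proof unfold_locales
    show "nonneg_q1_multiple d (\<lambda>n. \<rho> (dom C f) n - \<rho> (cod C f) n + \<rho> (cod C g) n)"
      if "(f, g, h) \<in> tri C" for f g h
      using c that triangle_sum unfolding nonneg_q1_multiple_def by fastforce
  qed (use tri d \<rho>R a b in \<open>auto simp: infinite_or_odd_def rd_q_def rd_add_def\<close>)
  have "integral_rank_function C d rk"
    if "\<forall>(f, g, h) \<in> tri C. \<exists>\<phi>. rd_nonneg d \<phi> \<and> rd_int d \<phi> \<and>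
        rd_add (rd_sub (\<rho> (dom C f)) (\<rho> (cod C f))) (\<rho> (cod C g)) = rd_q1 \<phi>"
    using rank_function_rk_of rk_of_int that triangle_sum
    unfolding integral_rank_function_def by fastforce
  then show ?thesis
    using rk_num_unique_quotient rank_function_rk_of by blast
qed

end
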